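(* Fix $\alpha_0>d/2$, let $C_0=K_0+K_1(\alpha_0)$, and let $W\in\mathcal M^s$ with $s\ge\alpha_0$. If $4C_0^2\|W\|_{\alpha_0}\le1/2$, then $V=I+W$ is invertible in $\mathcal M^s$ and $$\|V^{-1}\|_s\le1+2K_1(s)\|W\|_s\ (s>\alpha_0),\qquad \|V^{-1}\|_{\alpha_0}\le2,\qquad \|V^{-1}-I\|_s\le2K_1(s)\|W\|_s.$$
   Context: Let $d\ge1$; $|\mathbf k|=\max_v|k_v|$, $\langle\mathbf k\rangle=\max\{1,|\mathbf k|\}$. $(\mathfrak B,\|\cdot\|_{\mathfrak B})$ is a Banach algebra of complex sequences indexed by $\mathbb Z^d$, pointwise operations, containing the constant sequence $1$ with norm $1$, translation invariant ($\|\sigma_{\mathbf j}a\|_{\mathfrak B}=\|a\|_{\mathfrak B}$, $(\sigma_{\mathbf j}a)_{\mathbf i}=a_{\mathbf i-\mathbf j}$). $\mathcal M$: matrices $A=(a_{\mathbf i,\mathbf j})$ with $\mathbf k$-diagonals $A_{\mathbf k}=(a_{\mathbf i,\mathbf i-\mathbf k})_{\mathbf i}\in\mathfrak B$; $\|A\|_s^2=\sum_{\mathbf k}\|A_{\mathbf k}\|_{\mathfrak B}^2\langle\mathbf k\rangle^{2s}$; $\mathcal M^s=\{A:\|A\|_s<\infty\}$; $I$ is the identity; products are matrix products. $K_0=\sqrt{20\sum_{\mathbf k}\langle\mathbf k\rangle^{-2\alpha_0}}$, $K_1(s)=(1-10^{-1/(2s)})^{-s}\sqrt{2\sum_{\mathbf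 k}\langle\mathbf k\rangle^{-2\alpha_0}}$. *)

theory Defs
  imports "HOL-Analysis.Analysis"
begin

type_synonym 'd idx = "int ^ 'd"
type_synonym 'd sq = "'d idx \<Rightarrow> complex"
type_synonym 'd mat = "'d idx \<Rightarrow> 'd idx \<Rightarrow> complex"

definition supnorm :: "'d::finite idx \<Rightarrow> int" where
  "supnorm k = Max (range (\<lambda>v. \<bar>k $ v\<bar>))"

definition jbr :: "'d::finite idx \<Rightarrow> real" where
  "jbr k = max 1 (real_of_int (supnorm k))"

definition shift :: "'d::finite idx \<Rightarrow> 'd sq \<Rightarrow> 'd sq" where
  "shift j a = (\<lambda>i. a (i - j))"

definition seq_banach_algebra :: "'d::finite sq set \<Rightarrow> ('d sq \<Rightarrow> real) \<Rightarrow> bool" where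
  "seq_banach_algebra B nB \<longleftrightarrow>
     (\<lambda>_. 0) \<in> B \<and>
     (\<forall>a\<in>B. \<forall>b\<in>B. (\<lambda>i. a i + b i) \<in> B) \<and>
     (\<forall>a\<in>B. \<forall>c. (\<lambda>i. c * a i) \<in> B) \<and>
     (\<forall>a\<in>B. \<forall>b\<in>B. (\<lambda>i. a i * b i) \<in> B) \<and>
     (\<lambda>_. 1) \<in> B \<and> nB (\<lambda>_. 1) = 1 \<and>
     (\<forall>a\<in>B. 0 \<le> nB a) \<and>
     (\<forall>a\<in>B. nB a = 0 \<longleftrightarrow> a = (\<lambda>_. 0)) \<and>
     (\<forall>a\<in>B. \<forall>c. nB (\<lambda>i. c * a i) = cmod c * nB a) \<and>
     (\<forall>a\<in>B. \<forall>b\<in>B. nB (\<lambda>i. a i + b i) \<le> nB a + nB b) \<and>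
     (\<forall>a\<in>B. \<forall>b\<in>B. nB (\<lambda>i. a i * b i) \<le> nB a * nB b) \<and>
     (\<forall>X::nat \<Rightarrow> 'd sq. (\<forall>n. X n \<in> B) \<and>
         (\<forall>e>0. \<exists>N. \<forall>m\<ge>N. \<forall>n\<ge>N. nB (\<lambda>i. X m i - X n i) < e)
       \<longrightarrow> (\<exists>L\<in>B. (\<lambda>n. nB (\<lambda>i. X n i - L i)) \<longlonglongrightarrow> 0)) \<and>
     (\<forall>a\<in>B. \<forall>j. shift j a \<in> B \<and> nB (shift j a) = nB a)"

definition diag :: "'d::finite mat \<Rightarrow> 'd idx \<Rightarrow> 'd sq" where
  "diag A k = (\<lambda>i. A i (i - k))"

definition snorm :: "('d::finite sq \<Rightarrow> real) \<Rightarrow> real \<Rightarrow> 'd mat \<Rightarrow> real" where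
  "snorm nB s A = sqrt (\<Sum>\<^sub>\<infinity>k. (nB (diag A k))\<^sup>2 * jbr k powr (2 * s))"

definition Ms :: "'d::finite sq set \<Rightarrow> ('d sq \<Rightarrow> real) \<Rightarrow> real \<Rightarrow> 'd mat set" where
  "Ms B nB s = {A. (\<forall>k. diag A k \<in> B) \<and>
      (\<lambda>k. (nB (diag A k))\<^sup>2 * jbr k powr (2 * s)) summable_on UNIV}"

definition Imat :: "'d::finite mat" where
  "Imat = (\<lambda>i j. if i = j then 1 else 0)"

definition madd :: "'d::finite mat \<Rightarrow> 'd mat \<Rightarrow> 'd mat" where
  "madd A B = (\<lambda>i j. A i j + B i j)"

definition mdiff :: "'d::finite mat \<Rightarrow> 'd mat \<Rightarrow> 'd mat" where
  "mdiff A B = (\<lambda>i j. A i j - B i j)"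

definition mmult :: "'d::finite mat \<Rightarrow> 'd mat \<Rightarrow> 'd mat" where
  "mmult A B = (\<lambda>i j. \<Sum>\<^sub>\<infinity>l. A i l * B l j)"

definition K0 :: "'d::finite itself \<Rightarrow> real \<Rightarrow> real" where
  "K0 _ \<alpha>0 = sqrt (20 * (\<Sum>\<^sub>\<infinity>k::'d idx. jbr k powr (-2 * \<alpha>0)))"

definition K1 :: "'d::finite itself \<Rightarrow> real \<Rightarrow> real \<Rightarrow> real" where
  "K1 _ \<alpha>0 s = (1 - 10 powr (-1 / (2 * s))) powr (-s)
       * sqrt (2 * (\<Sum>\<^sub>\<infinity>k::'d idx. jbr k powr (-2 * \<alpha>0)))"

end

theory Submission
  imports Defs
begin

text \<open>Let \<open>a = \<alpha>0\<close>. Inserting \<open><m>^s \<le> sqrt 10 <m - k>^s + (1 - 10^(-1/(2s)))^(-s) <k>^s\<close> into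
  the convolution formula for the diagonals of a product, and combining Young's inequality with the
  Cauchy-Schwarz bound \<open>\<Sum>\<^sub>k |A\<^sub>k| \<le> (\<Sum>\<^sub>k <k>^(-2a))^(1/2) |A|\<^sub>a\<close> (finite because \<open>2a > d\<close>), gives the
  tame estimate \<open>|A C|\<^sub>s \<le> K0 |A|\<^sub>a |C|\<^sub>s + K1(s) |A|\<^sub>s |C|\<^sub>a\<close>. Hence the powers \<open>W^(n+1)\<close> decay
  geometrically in \<open>|.|\<^sub>a\<close> with ratio \<open>C0 |W|\<^sub>a \<le> 1/32\<close>, while \<open>q\<^sub>n = |W^(n+1)|\<^sub>s\<close> satisfies
  \<open>q\<^sub>n\<^sub>+\<^sub>1 \<le> K0 |W|\<^sub>a q\<^sub>n + K1(s) |W|\<^sub>s |W^(n+1)|\<^sub>a\<close>, so that \<open>\<Sum>\<^sub>n q\<^sub>n \<le> 2 K1(s) |W|\<^sub>s\<close>.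
  The Neumann series \<open>R = \<Sum>\<^sub>n (-W)^(n+1)\<close> therefore converges in \<open>M^s\<close> (the algebra \<open>B\<close> is
  complete, and evaluation at a point is bounded by its norm), and \<open>I + R\<close> inverts \<open>I + W\<close>.\<close>

section \<open>Infinite sums\<close>

lemma nonneg_summable_on_infsum_le:
  fixes f :: "'a \<Rightarrow> real"
  assumes "\<And>x. 0 \<le> f x" and "\<And>F. finite F \<Longrightarrow> sum f F \<le> M"
  shows "f summable_on UNIV \<and> infsum f UNIV \<le> M"
proof -
  have "f summable_on UNIV"
    by (rule nonneg_bdd_above_summable_on) (use assms in \<open>auto intro!: bdd_aboveI\<close>)
  then show ?thesis
    using assms(2) infsum_le_finite_sums by blast
qed

lemma L2_set_le_sqrt_infsum:
  fixes f :: "'a \<Rightarrow> real"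
  assumes "(\<lambda>k. (f k)\<^sup>2) summable_on UNIV" and "finite F"
  shows "L2_set f F \<le> sqrt (\<Sum>\<^sub>\<infinity>k. (f k)\<^sup>2)"
  unfolding L2_set_def using finite_sum_le_infsum[OF assms(1,2)] by simp

lemma sqrt_infsum_sq_le:
  fixes f :: "'a \<Rightarrow> real"
  assumes "\<And>F. finite F \<Longrightarrow> L2_set f F \<le> M"
  shows "(\<lambda>k. (f k)\<^sup>2) summable_on UNIV \<and> sqrt (\<Sum>\<^sub>\<infinity>k. (f k)\<^sup>2) \<le> M"
proof -
  have M: "0 \<le> M"
    using assms[of "{}"] by simp
  have "(\<Sum>k\<in>F. (f k)\<^sup>2) \<le> M\<^sup>2" if "finite F" for F
  proof -
    have "(sqrt (\<Sum>k\<in>F. (f k)\<^sup>2))\<^sup>2 \<le> M\<^sup>2"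
      using assms[OF that] unfolding L2_set_def by (intro power_mono) (auto intro: sum_nonneg)
    then show ?thesis
      by (simp add: sum_nonneg)
  qed
  then have "(\<lambda>k. (f k)\<^sup>2) summable_on UNIV \<and> (\<Sum>\<^sub>\<infinity>k. (f k)\<^sup>2) \<le> M\<^sup>2"
    by (intro nonneg_summable_on_infsum_le) auto
  then show ?thesis
    using M real_le_lsqrt by (auto simp: real_sqrt_le_iff)
qed

lemma infsum_Cauchy_Schwarz:
  fixes x y :: "'a \<Rightarrow> real"
  assumes "\<And>k. 0 \<le> x k" and "\<And>k. 0 \<le> y k"
    and "(\<lambda>k. (x k)\<^sup>2) summable_on UNIV" and "(\<lambda>k. (y k)\<^sup>2) summable_on UNIV"
  shows "(\<lambda>k. x k * y k) summable_on UNIV \<and>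
         (\<Sum>\<^sub>\<infinity>k. x k * y k) \<le> sqrt (\<Sum>\<^sub>\<infinity>k. (x k)\<^sup>2) * sqrt (\<Sum>\<^sub>\<infinity>k. (y k)\<^sup>2)"
proof (rule nonneg_summable_on_infsum_le)
  show "0 \<le> x k * y k" for k
    using assms by simp
  fix F :: "'a set"
  assume F: "finite F"
  have "(\<Sum>k\<in>F. x k * y k) \<le> L2_set x F * L2_set y F"
    using L2_set_mult_ineq[of x y F] assms(1,2) by simp
  also have "\<dots> \<le> sqrt (\<Sum>\<^sub>\<infinity>k. (x k)\<^sup>2) * sqrt (\<Sum>\<^sub>\<infinity>k. (y k)\<^sup>2)"
    by (intro mult_mono L2_set_le_sqrt_infsum) (use assms F in \<open>auto intro: infsum_nonneg\<close>)
  finally show "(\<Sum>k\<in>F. x k * y k) \<le> sqrt (\<Sum>\<^sub>\<infinity>k. (x k)\<^sup>2) * sqrt (\<Sum>\<^sub>\<infinity>k. (y k)\<^sup>2)" .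
qed

lemma sqrt_infsum_sq_add_le:
  fixes u x y :: "'a \<Rightarrow> real"
  assumes "\<And>k. 0 \<le> u k" and "\<And>k. u k \<le> x k + y k"
    and "(\<lambda>k. (x k)\<^sup>2) summable_on UNIV" and "(\<lambda>k. (y k)\<^sup>2) summable_on UNIV"
  shows "(\<lambda>k. (u k)\<^sup>2) summable_on UNIV \<and>
         sqrt (\<Sum>\<^sub>\<infinity>k. (u k)\<^sup>2) \<le> sqrt (\<Sum>\<^sub>\<infinity>k. (x k)\<^sup>2) + sqrt (\<Sum>\<^sub>\<infinity>k. (y k)\<^sup>2)"
proof (rule sqrt_infsum_sq_le)
  fix F :: "'a set"
  assume F: "finite F"
  have "L2_set u F \<le> L2_set (\<lambda>k. x k + y k) F"
    by (rule L2_set_mono) (use assms in auto)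
  also have "\<dots> \<le> L2_set x F + L2_set y F"
    by (rule L2_set_triangle_ineq)
  also have "\<dots> \<le> sqrt (\<Sum>\<^sub>\<infinity>k. (x k)\<^sup>2) + sqrt (\<Sum>\<^sub>\<infinity>k. (y k)\<^sup>2)"
    by (intro add_mono L2_set_le_sqrt_infsum) (use assms F in auto)
  finally show "L2_set u F \<le> sqrt (\<Sum>\<^sub>\<infinity>k. (x k)\<^sup>2) + sqrt (\<Sum>\<^sub>\<infinity>k. (y k)\<^sup>2)" .
qed

lemma sqrt_infsum_sq_mono:
  fixes u x :: "'a \<Rightarrow> real"
  assumes "\<And>k. 0 \<le> u k" and "\<And>k. u k \<le> x k" and "(\<lambda>k. (x k)\<^sup>2) summable_on UNIV"
  shows "(\<lambda>k. (u k)\<^sup>2) summable_on UNIV \<and> sqrt (\<Sum>\<^sub>\<infinity>k. (u k)\<^sup>2) \<le> sqrt (\<Sum>\<^sub>\<infinity>k. (x k)\<^sup>2)"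
  using sqrt_infsum_sq_add_le[of u x "\<lambda>_. 0"] assms by simp

lemma infsum_split_first:
  fixes f :: "nat \<Rightarrow> 'a::banach"
  assumes "f summable_on UNIV"
  shows "infsum f UNIV = f 0 + (\<Sum>\<^sub>\<infinity>n. f (Suc n))"
proof -
  have "UNIV = insert 0 (range Suc)"
    by (auto simp: image_iff) (metis not0_implies_Suc)
  moreover have "f summable_on range Suc"
    by (rule summable_on_subset_banach[OF assms]) simp
  moreover have "infsum f (insert 0 (range Suc)) = f 0 + infsum f (range Suc)"
    by (rule infsum_insert) (use \<open>f summable_on range Suc\<close> in auto)
  ultimately have "infsum f UNIV = f 0 + infsum f (range Suc)"
    by simp
  then show ?thesis
    by (simp add: infsum_reindex o_def)
qed

lemma has_sum_finite_sum:
  fixes f :: "'b \<Rightarrow> 'a \<Rightarrow> 'c::topological_comm_monoid_add"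
  assumes "finite K" and "\<And>k. k \<in> K \<Longrightarrow> (f k has_sum S k) A"
  shows "((\<lambda>n. \<Sum>k\<in>K. f k n) has_sum (\<Sum>k\<in>K. S k)) A"
  using assms by (induction K rule: finite_induct) (auto intro: has_sum_add)

lemma infsum_Minkowski:
  fixes v :: "nat \<Rightarrow> 'a \<Rightarrow> real" and u :: "'a \<Rightarrow> real"
  assumes v_nonneg: "\<And>n k. 0 \<le> v n k" and u_nonneg: "\<And>k. 0 \<le> u k"
    and v_sq_summable: "\<And>n. (\<lambda>k. (v n k)\<^sup>2) summable_on UNIV"
    and v_summable: "\<And>k. (\<lambda>n. v n k) summable_on UNIV"
    and norms_summable: "(\<lambda>n. sqrt (\<Sum>\<^sub>\<infinity>k. (v n k)\<^sup>2)) summable_on UNIV"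
    and u_le: "\<And>k. u k \<le> (\<Sum>\<^sub>\<infinity>n. v n k)"
  shows "(\<lambda>k. (u k)\<^sup>2) summable_on UNIV \<and>
         sqrt (\<Sum>\<^sub>\<infinity>k. (u k)\<^sup>2) \<le> (\<Sum>\<^sub>\<infinity>n. sqrt (\<Sum>\<^sub>\<infinity>k. (v n k)\<^sup>2))"
proof (rule sqrt_infsum_sq_le)
  define N where "N n = sqrt (\<Sum>\<^sub>\<infinity>k. (v n k)\<^sup>2)" for n
  fix K :: "'a set"
  assume K: "finite K"
  have sum_swap: "((\<lambda>n. \<Sum>k\<in>K. u k * v n k) has_sum (\<Sum>k\<in>K. u k * (\<Sum>\<^sub>\<infinity>n. v n k))) UNIV"
    by (rule has_sum_finite_sum[OF K], rule has_sum_cmult_right[OF has_sum_infsum[OF v_summable]])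
  have "(L2_set u K)\<^sup>2 = (\<Sum>k\<in>K. u k * u k)"
    unfolding L2_set_def by (simp add: sum_nonneg power2_eq_square)
  also have "\<dots> \<le> (\<Sum>k\<in>K. u k * (\<Sum>\<^sub>\<infinity>n. v n k))"
    by (intro sum_mono mult_left_mono u_le u_nonneg)
  also have "\<dots> = (\<Sum>\<^sub>\<infinity>n. \<Sum>k\<in>K. u k * v n k)"
    using sum_swap by (simp add: infsumI)
  also have "\<dots> \<le> (\<Sum>\<^sub>\<infinity>n. N n * L2_set u K)"
  proof (rule infsum_mono)
    show "(\<lambda>n. \<Sum>k\<in>K. u k * v n k) summable_on UNIV"
      using sum_swap by (rule has_sum_imp_summable)
    show "(\<lambda>n. N n * L2_set u K) summable_on UNIV"
      using summable_on_cmult_left[OF norms_summable] unfolding N_def .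
    show "(\<Sum>k\<in>K. u k * v n k) \<le> N n * L2_set u K" for n
    proof -
      have "(\<Sum>k\<in>K. u k * v n k) \<le> L2_set (v n) K * L2_set u K"
        using L2_set_mult_ineq[of "v n" u K] v_nonneg u_nonneg by (simp add: mult.commute)
      also have "\<dots> \<le> N n * L2_set u K"
        unfolding N_def by (intro mult_right_mono L2_set_le_sqrt_infsum v_sq_summable K) simp
      finally show ?thesis .
    qed
  qed
  also have "\<dots> = (\<Sum>\<^sub>\<infinity>n. N n) * L2_set u K"
    by (rule infsum_cmult_left')
  finally have "L2_set u K * L2_set u K \<le> (\<Sum>\<^sub>\<infinity>n. N n) * L2_set u K"
    by (simp add: power2_eq_square)
  moreover have "0 \<le> (\<Sum>\<^sub>\<infinity>n. N n)"
    unfolding N_def by (intro infsum_nonneg) (simp add: infsum_nonneg)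
  ultimately show "L2_set u K \<le> (\<Sum>\<^sub>\<infinity>n. sqrt (\<Sum>\<^sub>\<infinity>k. (v n k)\<^sup>2))"
    unfolding N_def by (cases "L2_set u K = 0") (auto simp: mult_le_cancel_right)
qed

lemma infsum_swap_dominated:
  fixes F :: "'a \<Rightarrow> 'b \<Rightarrow> 'c::banach" and G :: "'a \<Rightarrow> 'b \<Rightarrow> real"
  assumes F_le: "\<And>a b. norm (F a b) \<le> G a b"
    and G_has_sum: "\<And>a. (G a has_sum g a) UNIV" and g: "g summable_on UNIV"
  shows "(\<Sum>\<^sub>\<infinity>a. \<Sum>\<^sub>\<infinity>b. F a b) = (\<Sum>\<^sub>\<infinity>b. \<Sum>\<^sub>\<infinity>a. F a b)"
proof (rule infsum_swap_banach)
  have "(\<lambda>(a, b). G a b) summable_on UNIV \<times> UNIV"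
    by (rule summable_on_SigmaI[where g = g]) (use G_has_sum g F_le in \<open>auto intro: order_trans[OF norm_ge_zero]\<close>)
  then have "(\<lambda>(a, b). norm (F a b)) summable_on UNIV \<times> UNIV"
    by (rule summable_on_comparison_test) (auto simp: F_le)
  then have "(\<lambda>x. norm ((\<lambda>(a, b). F a b) x)) summable_on UNIV \<times> UNIV"
    by (simp add: case_prod_unfold)
  then show "(\<lambda>(a, b). F a b) summable_on UNIV \<times> UNIV"
    by (rule abs_summable_summable)
qed


section \<open>Convolution of nonnegative functions\<close>

lemma bij_betw_diff_left: "bij_betw (\<lambda>k. m - k) UNIV (UNIV :: 'a::ab_group_add set)"
  by (rule bij_betw_byWitness[where f' = "\<lambda>k. m - k"]) (auto simp: algebra_simps)

lemma bij_betw_diff_right: "bij_betw (\<lambda>k. k - m) UNIV (UNIV :: 'a::group_add set)"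
  by (rule bij_betw_byWitness[where f' = "\<lambda>k. k + m"]) auto

definition convolution :: "('a::ab_group_add \<Rightarrow> real) \<Rightarrow> ('a \<Rightarrow> real) \<Rightarrow> 'a \<Rightarrow> real" where
  "convolution a b m = (\<Sum>\<^sub>\<infinity>k. a k * b (m - k))"

lemma convolution_commute: "convolution a b = convolution b a"
proof
  fix m
  have "convolution b a m = (\<Sum>\<^sub>\<infinity>k. b (m - k) * a (m - (m - k)))"
    unfolding convolution_def by (rule infsum_reindex_bij_betw[OF bij_betw_diff_left, symmetric])
  then show "convolution a b m = convolution b a m"
    unfolding convolution_def by (simp add: mult.commute)
qed

lemma summable_convolution_commute:
  fixes a b :: "'a::ab_group_add \<Rightarrow> real"
  shows "(\<lambda>k. a k * b (m - k)) summable_on UNIV \<longleftrightarrow> (\<lambda>k. b k * a (m - k)) summable_on UNIV"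
proof -
  have "(\<lambda>k. b (m - k) * a (m - (m - k))) summable_on UNIV \<longleftrightarrow>
        (\<lambda>k. b k * a (m - k)) summable_on UNIV"
    using summable_on_reindex_bij_betw[OF bij_betw_diff_left, of "\<lambda>k. b k * a (m - k)" m] by simp
  then show ?thesis
    by (simp add: mult.commute)
qed

lemma has_sum_convolution:
  fixes a b :: "'a::ab_group_add \<Rightarrow> real"
  assumes "\<And>k. 0 \<le> a k" and "\<And>k. 0 \<le> b k"
    and a: "(a has_sum A) UNIV" and b: "(b has_sum B) UNIV"
  shows "(\<forall>m. (\<lambda>k. a k * b (m - k)) summable_on UNIV) \<and> (convolution a b has_sum (A * B)) UNIV"
proof -
  define F where "F = (\<lambda>(k, m). a k * b (m - k))"
  have row: "((\<lambda>m. F (k, m)) has_sum (a k * B)) UNIV" for k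
    using has_sum_cmult_right[OF has_sum_reindex_bij_betw[OF bij_betw_diff_right, THEN iffD2, OF b]]
    unfolding F_def by (simp add: o_def)
  have "F summable_on UNIV \<times> UNIV"
    by (rule summable_on_SigmaI[OF row]) (use assms in \<open>auto simp: F_def intro: summable_on_cmult_left has_sum_imp_summable\<close>)
  then have "(F has_sum (A * B)) (UNIV \<times> UNIV)"
    by (intro has_sum_SigmaI[OF row]) (auto intro: has_sum_cmult_left[OF a])
  then have swapped: "((\<lambda>(m, k). F (k, m)) has_sum (A * B)) (UNIV \<times> UNIV)"
    by (subst (asm) has_sum_swap)
  have col: "(\<lambda>k. a k * b (m - k)) summable_on UNIV" for m
    using summable_on_SigmaD1[of "\<lambda>m k. F (k, m)", OF _ UNIV_I] swapped has_sum_imp_summable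
    unfolding F_def by (fastforce simp: case_prod_unfold)
  have "(convolution a b has_sum (A * B)) UNIV"
    by (rule has_sum_SigmaD[OF swapped]) (use col in \<open>auto simp: F_def convolution_def\<close>)
  with col show ?thesis
    by blast
qed

lemma convolution_Young:
  fixes a g :: "'a::ab_group_add \<Rightarrow> real"
  assumes a_nonneg: "\<And>k. 0 \<le> a k" and g_nonneg: "\<And>k. 0 \<le> g k"
    and a: "a summable_on UNIV" and g: "(\<lambda>k. (g k)\<^sup>2) summable_on UNIV"
  shows "(\<forall>m. (\<lambda>k. a k * g (m - k)) summable_on UNIV) \<and>
         (\<lambda>m. (convolution a g m)\<^sup>2) summable_on UNIV \<and>
         sqrt (\<Sum>\<^sub>\<infinity>m. (convolution a g m)\<^sup>2) \<le> (\<Sum>\<^sub>\<infinity>k. a k) * sqrt (\<Sum>\<^sub>\<infinity>k. (g k)\<^sup>2)"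
proof -
  define A where "A = (\<Sum>\<^sub>\<infinity>k. a k)"
  define G where "G = (\<Sum>\<^sub>\<infinity>k. (g k)\<^sup>2)"
  define h where "h = convolution a (\<lambda>k. (g k)\<^sup>2)"
  have A: "0 \<le> A" and G: "0 \<le> G"
    unfolding A_def G_def using a_nonneg by (auto intro: infsum_nonneg)
  have h: "\<forall>m. (\<lambda>k. a k * (g (m - k))\<^sup>2) summable_on UNIV" "(h has_sum (A * G)) UNIV"
    using has_sum_convolution[OF a_nonneg _ has_sum_infsum[OF a] has_sum_infsum[OF g]]
    unfolding h_def A_def G_def by auto
  \<comment> \<open>Cauchy-Schwarz for \<open>\<surd>a\<close> against \<open>\<surd>a \<cdot> g(m - \<cdot>)\<close>\<close>
  have pointwise: "(\<lambda>k. a k * g (m - k)) summable_on UNIV \<and> (convolution a g m)\<^sup>2 \<le> A * h m" for m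
  proof -
    have "(\<lambda>k. sqrt (a k) * (sqrt (a k) * g (m - k))) summable_on UNIV \<and>
          (\<Sum>\<^sub>\<infinity>k. sqrt (a k) * (sqrt (a k) * g (m - k)))
            \<le> sqrt (\<Sum>\<^sub>\<infinity>k. (sqrt (a k))\<^sup>2) * sqrt (\<Sum>\<^sub>\<infinity>k. (sqrt (a k) * g (m - k))\<^sup>2)"
      by (rule infsum_Cauchy_Schwarz)
        (use a_nonneg g_nonneg a h(1) in \<open>auto simp: power_mult_distrib\<close>)
    moreover have "0 \<le> convolution a g m"
      unfolding convolution_def using a_nonneg g_nonneg by (auto intro: infsum_nonneg)
    ultimately have "(\<lambda>k. a k * g (m - k)) summable_on UNIV \<and> convolution a g m \<le> sqrt A * sqrt (h m)"
      and "0 \<le> convolution a g m"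
      using a_nonneg unfolding convolution_def h_def A_def
      by (auto simp: power_mult_distrib mult.assoc[symmetric])
    then show ?thesis
      using power_mono[of "convolution a g m" "sqrt A * sqrt (h m)" 2] A
      by (auto simp: power_mult_distrib h_def convolution_def infsum_nonneg a_nonneg)
  qed
  have sq_summable: "(\<lambda>m. (convolution a g m)\<^sup>2) summable_on UNIV"
    by (rule summable_on_comparison_test[OF summable_on_cmult_right[OF has_sum_imp_summable[OF h(2)]]])
      (use pointwise in auto)
  have "(\<Sum>\<^sub>\<infinity>m. (convolution a g m)\<^sup>2) \<le> (\<Sum>\<^sub>\<infinity>m. A * h m)"
    by (rule infsum_mono[OF sq_summable summable_on_cmult_right[OF has_sum_imp_summable[OF h(2)]]])
      (use pointwise in auto)
  also have "\<dots> = (A * sqrt G)\<^sup>2"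
    using infsumI[OF h(2)] A G by (simp add: infsum_cmult_right' power_mult_distrib power2_eq_square)
  finally show ?thesis
    using pointwise sq_summable A G unfolding A_def G_def by (auto intro: real_le_lsqrt)
qed

lemma convolution_weighted_le:
  fixes a c w :: "'a::ab_group_add \<Rightarrow> real"
  assumes nonneg: "\<And>k. 0 \<le> a k" "\<And>k. 0 \<le> c k" "\<And>k. 0 \<le> w k" "0 \<le> \<alpha>" "0 \<le> \<beta>"
    and split: "\<And>m k. w m \<le> \<alpha> * w (m - k) + \<beta> * w k"
    and ac: "(\<lambda>k. a k * c (m - k)) summable_on UNIV"
    and a_cw: "(\<lambda>k. a k * (c (m - k) * w (m - k))) summable_on UNIV"
    and c_aw: "(\<lambda>k. c k * (a (m - k) * w (m - k))) summable_on UNIV"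
  shows "convolution a c m * w m
           \<le> \<alpha> * convolution a (\<lambda>k. c k * w k) m + \<beta> * convolution c (\<lambda>k. a k * w k) m"
proof -
  have aw_c: "(\<lambda>k. a k * w k * c (m - k)) summable_on UNIV"
    using c_aw summable_convolution_commute[of c "\<lambda>k. a k * w k"] by (simp add: mult.commute)
  have "convolution a c m * w m = (\<Sum>\<^sub>\<infinity>k. a k * c (m - k) * w m)"
    unfolding convolution_def by (rule infsum_cmult_left'[symmetric])
  also have "\<dots> \<le> (\<Sum>\<^sub>\<infinity>k. \<alpha> * (a k * (c (m - k) * w (m - k))) + \<beta> * (a k * w k * c (m - k)))"
  proof (rule infsum_mono)
    show "(\<lambda>k. a k * c (m - k) * w m) summable_on UNIV"
      by (rule summable_on_cmult_left[OF ac])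
    show "(\<lambda>k. \<alpha> * (a k * (c (m - k) * w (m - k))) + \<beta> * (a k * w k * c (m - k))) summable_on UNIV"
      by (intro summable_on_add summable_on_cmult_right a_cw aw_c)
    show "a k * c (m - k) * w m \<le> \<alpha> * (a k * (c (m - k) * w (m - k))) + \<beta> * (a k * w k * c (m - k))" for k
      using mult_left_mono[OF split[of m k], of "a k * c (m - k)"] nonneg
      by (simp add: algebra_simps)
  qed
  also have "\<dots> = \<alpha> * convolution a (\<lambda>k. c k * w k) m + \<beta> * convolution (\<lambda>k. a k * w k) c m"
    unfolding convolution_def
    by (simp add: infsum_add[OF summable_on_cmult_right[OF a_cw] summable_on_cmult_right[OF aw_c]]
        infsum_cmult_right')
  finally show ?thesis
    by (simp add: convolution_commute)
qed

lemma convolution_weighted_sq_le: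
  fixes a c w :: "'a::ab_group_add \<Rightarrow> real"
  assumes nonneg: "\<And>k. 0 \<le> a k" "\<And>k. 0 \<le> c k" "\<And>k. 0 \<le> w k" "0 \<le> \<alpha>" "0 \<le> \<beta>"
    and split: "\<And>m k. w m \<le> \<alpha> * w (m - k) + \<beta> * w k"
    and summable: "a summable_on UNIV" "c summable_on UNIV"
      "(\<lambda>k. (a k * w k)\<^sup>2) summable_on UNIV" "(\<lambda>k. (c k * w k)\<^sup>2) summable_on UNIV"
  shows "(\<lambda>m. (convolution a c m * w m)\<^sup>2) summable_on UNIV \<and>
         sqrt (\<Sum>\<^sub>\<infinity>m. (convolution a c m * w m)\<^sup>2)
           \<le> \<alpha> * (\<Sum>\<^sub>\<infinity>k. a k) * sqrt (\<Sum>\<^sub>\<infinity>k. (c k * w k)\<^sup>2)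
             + \<beta> * (\<Sum>\<^sub>\<infinity>k. c k) * sqrt (\<Sum>\<^sub>\<infinity>k. (a k * w k)\<^sup>2)"
proof -
  define X where "X = convolution a (\<lambda>k. c k * w k)"
  define Y where "Y = convolution c (\<lambda>k. a k * w k)"
  have X: "\<forall>m. (\<lambda>k. a k * (c (m - k) * w (m - k))) summable_on UNIV"
      "(\<lambda>m. (X m)\<^sup>2) summable_on UNIV"
      "sqrt (\<Sum>\<^sub>\<infinity>m. (X m)\<^sup>2) \<le> (\<Sum>\<^sub>\<infinity>k. a k) * sqrt (\<Sum>\<^sub>\<infinity>k. (c k * w k)\<^sup>2)"
    using convolution_Young[of a "\<lambda>k. c k * w k"] nonneg summable unfolding X_def by auto
  have Y: "\<forall>m. (\<lambda>k. c k * (a (m - k) * w (m - k))) summable_on UNIV"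
      "(\<lambda>m. (Y m)\<^sup>2) summable_on UNIV"
      "sqrt (\<Sum>\<^sub>\<infinity>m. (Y m)\<^sup>2) \<le> (\<Sum>\<^sub>\<infinity>k. c k) * sqrt (\<Sum>\<^sub>\<infinity>k. (a k * w k)\<^sup>2)"
    using convolution_Young[of c "\<lambda>k. a k * w k"] nonneg summable unfolding Y_def by auto
  have ac: "(\<lambda>k. a k * c (m - k)) summable_on UNIV" for m
    using has_sum_convolution[OF nonneg(1,2) has_sum_infsum[OF summable(1)] has_sum_infsum[OF summable(2)]]
    by blast
  have "(\<lambda>m. (convolution a c m * w m)\<^sup>2) summable_on UNIV \<and>
        sqrt (\<Sum>\<^sub>\<infinity>m. (convolution a c m * w m)\<^sup>2)
          \<le> sqrt (\<Sum>\<^sub>\<infinity>m. (\<alpha> * X m)\<^sup>2) + sqrt (\<Sum>\<^sub>\<infinity>m. (\<beta> * Y m)\<^sup>2)"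
  proof (rule sqrt_infsum_sq_add_le)
    show "0 \<le> convolution a c m * w m" for m
      unfolding convolution_def using nonneg by (auto intro!: infsum_nonneg mult_nonneg_nonneg)
    show "convolution a c m * w m \<le> \<alpha> * X m + \<beta> * Y m" for m
      unfolding X_def Y_def by (rule convolution_weighted_le[OF nonneg split ac]) (use X Y in auto)
  qed (use X Y in \<open>auto simp: power_mult_distrib intro: summable_on_cmult_right\<close>)
  moreover have "sqrt (\<Sum>\<^sub>\<infinity>m. (\<alpha> * X m)\<^sup>2) = \<alpha> * sqrt (\<Sum>\<^sub>\<infinity>m. (X m)\<^sup>2)"
    and "sqrt (\<Sum>\<^sub>\<infinity>m. (\<beta> * Y m)\<^sup>2) = \<beta> * sqrt (\<Sum>\<^sub>\<infinity>m. (Y m)\<^sup>2)"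
    using nonneg by (simp_all add: power_mult_distrib infsum_cmult_right' real_sqrt_mult)
  ultimately show ?thesis
    using X(3) Y(3) nonneg by (smt (verit) mult_left_mono mult.assoc)
qed


section \<open>The weight \<open>\<langle>k\<rangle>\<close>\<close>

lemma abs_le_supnorm: "\<bar>k $ v\<bar> \<le> supnorm k"
  unfolding supnorm_def by (rule Max_ge) auto

lemma supnorm_nonneg: "0 \<le> supnorm k"
  using abs_le_supnorm[of k] abs_ge_zero order_trans by blast

lemma supnorm_triangle: "supnorm m \<le> supnorm k + supnorm (m - k)"
proof -
  have "\<bar>m $ v\<bar> \<le> supnorm k + supnorm (m - k)" for v
    using abs_le_supnorm[of k v] abs_le_supnorm[of "m - k" v] by simp
  then show ?thesis
    unfolding supnorm_def[of m] by (subst Max_le_iff) auto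
qed

lemma jbr_ge_1: "1 \<le> jbr k"
  unfolding jbr_def by simp

lemma jbr_pos: "0 < jbr k"
  using jbr_ge_1[of k] by simp

lemma jbr_zero: "jbr (0 :: 'd::finite idx) = 1"
  unfolding jbr_def supnorm_def by simp

lemma jbr_triangle: "jbr m \<le> jbr k + jbr (m - k)"
  using supnorm_triangle[of m k] supnorm_nonneg[of k] supnorm_nonneg[of "m - k"]
  unfolding jbr_def by linarith

lemma max_1_abs_le_jbr: "max 1 \<bar>real_of_int (k $ v)\<bar> \<le> jbr k"
  using abs_le_supnorm[of k v] unfolding jbr_def by linarith

text \<open>Split according to whether \<open>\<theta> x \<le> z\<close> for \<open>\<theta> = 10 powr (-1 / (2 * s))\<close>, so that
  \<open>\<theta> powr (-s) = sqrt 10\<close>; this is where the constants \<open>K0\<close> and \<open>K1\<close> come from.\<close>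

lemma powr_le_split:
  fixes x y z s :: real
  assumes "0 < x" and "0 < z" and "x \<le> y + z" and "0 < s"
  shows "x powr s \<le> sqrt 10 * z powr s + (1 - 10 powr (-1 / (2 * s))) powr (-s) * y powr s"
proof -
  define \<theta> where "\<theta> = 10 powr (-1 / (2 * s))"
  have \<theta>: "0 < \<theta>" "\<theta> < 1"
    unfolding \<theta>_def using assms(4) by (auto intro: powr_less_one)
  have "\<theta> powr (-s) = sqrt 10"
    unfolding \<theta>_def powr_powr using assms(4) by (simp add: powr_half_sqrt)
  show ?thesis
  proof (cases "\<theta> * x \<le> z")
    case True
    then have "x powr s \<le> (z / \<theta>) powr s"
      using \<theta> assms by (intro powr_mono2) (auto simp: field_simps)
    also have "\<dots> = z powr s * \<theta> powr (-s)"
      unfolding powr_divide powr_minus_divide by simp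
    also have "\<dots> = sqrt 10 * z powr s"
      using \<open>\<theta> powr (-s) = sqrt 10\<close> by simp
    finally show ?thesis
      unfolding \<theta>_def by (smt (verit) mult_nonneg_nonneg powr_ge_zero)
  next
    case False
    then have "x powr s \<le> (y / (1 - \<theta>)) powr s"
      using \<theta> assms by (intro powr_mono2) (auto simp: field_simps)
    also have "\<dots> = (1 - \<theta>) powr (-s) * y powr s"
      by (simp add: powr_divide powr_minus_divide)
    finally show ?thesis
      unfolding \<theta>_def by (smt (verit) mult_nonneg_nonneg powr_ge_zero real_sqrt_ge_zero)
  qed
qed

lemma jbr_powr_split:
  assumes "0 < s"
  shows "jbr m powr s \<le> sqrt 10 * jbr (m - k) powr s + (1 - 10 powr (-1 / (2 * s))) powr (-s) * jbr k powr s"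
  by (rule powr_le_split[OF jbr_pos jbr_pos jbr_triangle assms])

lemma summable_on_int_powr:
  assumes "1 < \<beta>"
  shows "(\<lambda>j::int. (max 1 \<bar>real_of_int j\<bar>) powr (-\<beta>)) summable_on UNIV"
proof -
  define h where "h j = (max 1 \<bar>real_of_int j\<bar>) powr (-\<beta>)" for j :: int
  have "summable (\<lambda>n::nat. real n powr (-\<beta>))"
    using assms by (simp add: summable_real_powr_iff)
  moreover have "eventually (\<lambda>n. h (int n) = real n powr (-\<beta>)) sequentially"
    using eventually_ge_at_top[of "1::nat"] by eventually_elim (simp add: h_def)
  ultimately have "summable (\<lambda>n::nat. h (int n))"
    using summable_cong by fastforce
  then have nonneg_part: "(\<lambda>n::nat. h (int n)) summable_on UNIV"
    by (rule summable_nonneg_imp_summable_on) (simp add: h_def)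
  have "h summable_on range int"
    using summable_on_reindex[of int UNIV h] nonneg_part by (simp add: o_def)
  moreover have "h summable_on range (\<lambda>n. - int n)"
    using summable_on_reindex[of "\<lambda>n. - int n" UNIV h] nonneg_part by (simp add: o_def inj_on_def h_def)
  ultimately have "h summable_on (range int \<union> range (\<lambda>n. - int n))"
    by (rule summable_on_union)
  moreover have "j \<in> range int \<union> range (\<lambda>n. - int n)" for j
  proof (cases "0 \<le> j")
    case True
    then show ?thesis
      by (auto intro: image_eqI[of j int "nat j"])
  next
    case False
    then show ?thesis
      by (auto intro: image_eqI[of j "\<lambda>n. - int n" "nat (- j)"])
  qed
  ultimately show ?thesis
    unfolding h_def by (metis UNIV_eq_I)
qed

lemma jbr_powr_le_prod:
  fixes k :: "'d::finite idx" and \<beta> :: real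
  assumes "0 \<le> \<beta>"
  shows "jbr k powr (- \<beta> * CARD('d)) \<le> (\<Prod>v\<in>UNIV. (max 1 \<bar>real_of_int (k $ v)\<bar>) powr (- \<beta>))"
proof -
  have "jbr k powr (- \<beta> * CARD('d)) = (jbr k powr (- \<beta>)) powr CARD('d)"
    by (simp add: powr_powr)
  also have "\<dots> = (\<Prod>v\<in>(UNIV::'d set). jbr k powr (- \<beta>))"
    using jbr_pos[of k] by (simp add: powr_realpow)
  also have "\<dots> \<le> (\<Prod>v\<in>UNIV. (max 1 \<bar>real_of_int (k $ v)\<bar>) powr (- \<beta>))"
    by (intro prod_mono conjI powr_mono2' max_1_abs_le_jbr) (use assms in auto)
  finally show ?thesis .
qed

lemma sum_jbr_powr_le:
  fixes F :: "'d::finite idx set" and \<beta> :: real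
  defines "h \<equiv> \<lambda>j::int. (max 1 \<bar>real_of_int j\<bar>) powr (- \<beta>)"
  assumes "finite F" and "0 \<le> \<beta>" and h: "h summable_on UNIV"
  shows "(\<Sum>k\<in>F. jbr k powr (- \<beta> * CARD('d))) \<le> (\<Sum>\<^sub>\<infinity>j. h j) ^ CARD('d)"
proof -
  define N where "N = Max (insert 0 (supnorm ` F))"
  define box where "box = PiE (UNIV :: 'd set) (\<lambda>_. {-N..N})"
  have "F \<subseteq> vec_lambda ` box"
  proof
    fix k assume "k \<in> F"
    then have "supnorm k \<le> N"
      unfolding N_def using \<open>finite F\<close> by (intro Max_ge) auto
    then have "k $ v \<in> {-N..N}" for v
      using abs_le_supnorm[of k v] by (auto simp: abs_le_iff)
    then have "vec_nth k \<in> box"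
      unfolding box_def by (simp add: PiE_iff)
    then show "k \<in> vec_lambda ` box"
      by (metis image_eqI vec_nth_inverse)
  qed
  moreover have "finite box"
    unfolding box_def by (intro finite_PiE) auto
  ultimately have "(\<Sum>k\<in>F. jbr k powr (- \<beta> * CARD('d))) \<le> (\<Sum>k\<in>vec_lambda ` box. \<Prod>v\<in>UNIV. h (k $ v))"
    using jbr_powr_le_prod[OF \<open>0 \<le> \<beta>\<close>] unfolding h_def
    by (intro order_trans[OF sum_mono sum_mono2]) (auto intro: prod_nonneg)
  also have "\<dots> = (\<Sum>g\<in>box. \<Prod>v\<in>UNIV. h (g v))"
    by (subst sum.reindex) (auto simp: inj_on_def)
  also have "\<dots> = (\<Prod>v\<in>(UNIV :: 'd set). \<Sum>j\<in>{-N..N}. h j)"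
    unfolding box_def by (rule prod_sum_PiE[symmetric]) auto
  also have "\<dots> \<le> (\<Prod>v\<in>(UNIV :: 'd set). \<Sum>\<^sub>\<infinity>j. h j)"
    using finite_sum_le_infsum[OF h, of "{-N..N}"]
    by (intro prod_mono conjI sum_nonneg) (auto simp: h_def)
  also have "\<dots> = (\<Sum>\<^sub>\<infinity>j. h j) ^ CARD('d)"
    by simp
  finally show ?thesis .
qed

lemma summable_jbr_powr:
  assumes "real CARD('d::finite) / 2 < \<alpha>"
  shows "(\<lambda>k::'d idx. jbr k powr (-2 * \<alpha>)) summable_on UNIV"
proof -
  define \<beta> where "\<beta> = 2 * \<alpha> / CARD('d)"
  have "1 < \<beta>"
    using assms unfolding \<beta>_def by (simp add: field_simps)
  then have "(\<Sum>k\<in>F. jbr k powr (- \<beta> * CARD('d))) \<le> (\<Sum>\<^sub>\<infinity>j::int. (max 1 \<bar>real_of_int j\<bar>) powr (- \<beta>)) ^ CARD('d)"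
    if "finite F" for F :: "'d idx set"
    using sum_jbr_powr_le[OF that] summable_on_int_powr by simp
  moreover have "- \<beta> * CARD('d) = -2 * \<alpha>"
    unfolding \<beta>_def by simp
  ultimately show ?thesis
    by (intro conjunct1[OF nonneg_summable_on_infsum_le]) auto
qed


section \<open>Sequence Banach algebras\<close>

locale seq_algebra =
  fixes B :: "'d::finite sq set" and nB :: "'d sq \<Rightarrow> real"
  assumes seq_banach_algebra: "seq_banach_algebra B nB"
begin

lemma
  shows zero_mem: "(\<lambda>_. 0) \<in> B"
    and add_mem: "a \<in> B \<Longrightarrow> b \<in> B \<Longrightarrow> (\<lambda>i. a i + b i) \<in> B"
    and scale_mem: "a \<in> B \<Longrightarrow> (\<lambda>i. c * a i) \<in> B"
    and mult_mem: "a \<in> B \<Longrightarrow> b \<in> B \<Longrightarrow> (\<lambda>i. a i * b i) \<in> B"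
    and one_mem: "(\<lambda>_. 1) \<in> B"
    and norm_one: "nB (\<lambda>_. 1) = 1"
    and norm_nonneg: "a \<in> B \<Longrightarrow> 0 \<le> nB a"
    and norm_eq_zero_iff: "a \<in> B \<Longrightarrow> nB a = 0 \<longleftrightarrow> a = (\<lambda>_. 0)"
    and norm_scale: "a \<in> B \<Longrightarrow> nB (\<lambda>i. c * a i) = cmod c * nB a"
    and norm_add_le: "a \<in> B \<Longrightarrow> b \<in> B \<Longrightarrow> nB (\<lambda>i. a i + b i) \<le> nB a + nB b"
    and norm_mult_le: "a \<in> B \<Longrightarrow> b \<in> B \<Longrightarrow> nB (\<lambda>i. a i * b i) \<le> nB a * nB b"
    and shift_mem: "a \<in> B \<Longrightarrow> shift j a \<in> B"
    and norm_shift: "a \<in> B \<Longrightarrow> nB (shift j a) = nB a"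
  using seq_banach_algebra[unfolded seq_banach_algebra_def] by blast+

lemma Cauchy_imp_convergent:
  assumes "\<And>n. X n \<in> B"
    and "\<And>e. 0 < e \<Longrightarrow> \<exists>N. \<forall>m\<ge>N. \<forall>n\<ge>N. nB (\<lambda>i. X m i - X n i) < e"
  shows "\<exists>L\<in>B. (\<lambda>n. nB (\<lambda>i. X n i - L i)) \<longlonglongrightarrow> 0"
  using seq_banach_algebra[unfolded seq_banach_algebra_def] assms by blast

lemma norm_zero: "nB (\<lambda>_. 0) = 0"
  using norm_eq_zero_iff zero_mem by blast

lemma uminus_mem: "a \<in> B \<Longrightarrow> (\<lambda>i. - a i) \<in> B"
  using scale_mem[of a "-1"] by simp

lemma diff_mem: "a \<in> B \<Longrightarrow> b \<in> B \<Longrightarrow> (\<lambda>i. a i - b i) \<in> B"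
  using add_mem[OF _ uminus_mem, of a b] by simp

lemma norm_uminus: "a \<in> B \<Longrightarrow> nB (\<lambda>i. - a i) = nB a"
  using norm_scale[of a "-1"] by simp

lemma norm_minus_commute: "a \<in> B \<Longrightarrow> b \<in> B \<Longrightarrow> nB (\<lambda>i. a i - b i) = nB (\<lambda>i. b i - a i)"
  using norm_uminus[OF diff_mem[of a b]] by simp

lemma sum_mem_norm_le:
  assumes "finite F" and "\<And>k. k \<in> F \<Longrightarrow> f k \<in> B"
  shows "(\<lambda>i. \<Sum>k\<in>F. f k i) \<in> B \<and> nB (\<lambda>i. \<Sum>k\<in>F. f k i) \<le> (\<Sum>k\<in>F. nB (f k))"
  using assms
proof (induction F rule: finite_induct)
  case empty
  then show ?case
    using zero_mem norm_zero by simp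
next
  case (insert x F)
  then show ?case
    using add_mem[of "f x" "\<lambda>i. \<Sum>k\<in>F. f k i"] norm_add_le[of "f x" "\<lambda>i. \<Sum>k\<in>F. f k i"]
    by auto
qed

lemma power_mem_norm_le:
  assumes "x \<in> B"
  shows "(\<lambda>i. x i ^ n) \<in> B \<and> nB (\<lambda>i. x i ^ n) \<le> nB x ^ n"
proof (induction n)
  case 0
  then show ?case
    using one_mem norm_one by simp
next
  case (Suc n)
  then have "nB (\<lambda>i. x i * x i ^ n) \<le> nB x * nB x ^ n"
    using norm_mult_le[OF assms, of "\<lambda>i. x i ^ n"] norm_nonneg[OF assms]
    by (meson mult_left_mono order_trans)
  with Suc show ?case
    using mult_mem[OF assms, of "\<lambda>i. x i ^ n"] by simp
qed

lemma norm_summable_partial_sums_converge: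
  assumes f: "\<And>n. f n \<in> B" and summable: "(\<lambda>n. nB (f n)) summable_on UNIV"
  shows "\<exists>L\<in>B. (\<lambda>N. nB (\<lambda>i. (\<Sum>n<N. f n i) - L i)) \<longlonglongrightarrow> 0"
proof (rule Cauchy_imp_convergent)
  have partial_mem: "(\<lambda>i. \<Sum>k<N. f k i) \<in> B" for N
    using sum_mem_norm_le[of "{..<N}" f] f by auto
  then show "(\<lambda>i. \<Sum>k<N. f k i) \<in> B" for N .
  have diff_le: "nB (\<lambda>i. (\<Sum>k<m. f k i) - (\<Sum>k<n. f k i)) \<le> (\<Sum>k\<in>{n..<m}. nB (f k))"
    if "n \<le> m" for m n
  proof -
    have "(\<lambda>i. (\<Sum>k<m. f k i) - (\<Sum>k<n. f k i)) = (\<lambda>i. \<Sum>k\<in>{n..<m}. f k i)"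
      using that by (simp add: sum_diff_nat_ivl lessThan_atLeast0)
    then show ?thesis
      using sum_mem_norm_le[of "{n..<m}" f] f by simp
  qed
  have "summable (\<lambda>n. nB (f n))"
    using summable summable_on_UNIV_nonneg_real_iff[of "\<lambda>n. nB (f n)"] by (simp add: norm_nonneg[OF f])
  fix e :: real
  assume "0 < e"
  then have "\<exists>N. \<forall>n\<ge>N. \<forall>m. norm (\<Sum>k\<in>{n..<m}. nB (f k)) < e"
    using \<open>summable (\<lambda>n. nB (f n))\<close> unfolding summable_Cauchy by blast
  then obtain N where N: "\<And>n m. N \<le> n \<Longrightarrow> \<bar>\<Sum>k\<in>{n..<m}. nB (f k)\<bar> < e"
    by auto
  have "nB (\<lambda>i. (\<Sum>k<m. f k i) - (\<Sum>k<n. f k i)) < e" if "N \<le> m" "N \<le> n" for m n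
  proof (cases "n \<le> m")
    case True
    then show ?thesis
      using diff_le[OF True] N[OF that(2), of m] by linarith
  next
    case False
    then have "nB (\<lambda>i. (\<Sum>k<n. f k i) - (\<Sum>k<m. f k i)) < e"
      using diff_le[of m n] N[OF that(1), of n] by linarith
    then show ?thesis
      using norm_minus_commute[OF partial_mem partial_mem] by simp
  qed
  then show "\<exists>N. \<forall>m\<ge>N. \<forall>n\<ge>N. nB (\<lambda>i. (\<Sum>k<m. f k i) - (\<Sum>k<n. f k i)) < e"
    by blast
qed

lemma geometric_series_converges:
  assumes x: "x \<in> B" and small: "nB x < 1"
  shows "\<exists>L\<in>B. (\<lambda>N. nB (\<lambda>i. (\<Sum>n<N. x i ^ n) - L i)) \<longlonglongrightarrow> 0"
proof (rule norm_summable_partial_sums_converge)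
  show "(\<lambda>i. x i ^ n) \<in> B" for n
    using power_mem_norm_le[OF x] by blast
  have "(\<lambda>n. nB x ^ n) summable_on UNIV"
    by (rule summable_nonneg_imp_summable_on) (use small norm_nonneg[OF x] in \<open>auto intro: summable_geometric\<close>)
  then show "(\<lambda>n. nB (\<lambda>i. x i ^ n)) summable_on UNIV"
    by (rule summable_on_comparison_test) (use power_mem_norm_le[OF x] norm_nonneg in auto)
qed

lemma one_minus_invertible:
  assumes x: "x \<in> B" and small: "nB x < 1"
  shows "\<exists>L\<in>B. (\<lambda>i. (1 - x i) * L i) = (\<lambda>_. 1)"
proof -
  obtain L where L: "L \<in> B" and lim: "(\<lambda>N. nB (\<lambda>i. (\<Sum>n<N. x i ^ n) - L i)) \<longlonglongrightarrow> 0"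
    using geometric_series_converges[OF assms] by blast
  define y where "y = (\<lambda>i. (1 - x i) * L i - 1)"
  have one_minus_x: "(\<lambda>i. 1 - x i) \<in> B"
    by (rule diff_mem[OF one_mem x])
  have y: "y \<in> B"
    unfolding y_def by (intro diff_mem mult_mem one_minus_x L one_mem)
  \<comment> \<open>\<open>(1 - x) \<Sum>\<^sub>n\<^sub><\<^sub>N x\<^sup>n = 1 - x\<^sup>N\<close>, so \<open>y = (1 - x)(L - S\<^sub>N) - x\<^sup>N\<close>\<close>
  have "nB y \<le> nB (\<lambda>i. 1 - x i) * nB (\<lambda>i. (\<Sum>n<N. x i ^ n) - L i) + nB x ^ N" for N
  proof -
    define S where "S = (\<lambda>i. \<Sum>n<N. x i ^ n)"
    have S: "S \<in> B"
      unfolding S_def using sum_mem_norm_le[of "{..<N}" "\<lambda>n i. x i ^ n"] power_mem_norm_le[OF x] by auto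
    have "(1 - x i) * (L i - S i) = (1 - x i) * L i - (1 - x i ^ N)" for i
      unfolding S_def by (simp only: right_diff_distrib one_diff_power_eq)
    then have "y = (\<lambda>i. (1 - x i) * (L i - S i) + - (x i ^ N))"
      unfolding y_def by simp
    then have "nB y \<le> nB (\<lambda>i. (1 - x i) * (L i - S i)) + nB (\<lambda>i. - (x i ^ N))"
      using norm_add_le mult_mem[OF one_minus_x diff_mem[OF L S]] uminus_mem power_mem_norm_le[OF x]
      by presburger
    also have "\<dots> \<le> nB (\<lambda>i. 1 - x i) * nB (\<lambda>i. L i - S i) + nB x ^ N"
      using norm_mult_le[OF one_minus_x diff_mem[OF L S]] norm_uminus power_mem_norm_le[OF x, of N]
      by (intro add_mono) auto
    finally show ?thesis
      using norm_minus_commute[OF L S] unfolding S_def by simp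
  qed
  moreover have "(\<lambda>N. nB (\<lambda>i. 1 - x i) * nB (\<lambda>i. (\<Sum>n<N. x i ^ n) - L i) + nB x ^ N) \<longlonglongrightarrow> 0"
    using tendsto_add[OF tendsto_mult_right_zero[OF lim] LIMSEQ_power_zero[of "nB x"]] small norm_nonneg[OF x]
    by simp
  ultimately have "nB y \<le> 0"
    by (intro LIMSEQ_le_const[of _ 0]) auto
  then have "y = (\<lambda>_. 0)"
    using norm_nonneg[OF y] norm_eq_zero_iff[OF y] by simp
  then show ?thesis
    using L unfolding y_def by (auto simp: fun_eq_iff)
qed

text \<open>If \<open>\<bar>a i\<bar> > nB a\<close>, then \<open>x = a / a i\<close> has \<open>nB x < 1\<close>, so \<open>1 - x\<close> is invertible in \<open>B\<close>,
  although it vanishes at \<open>i\<close>.\<close>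

lemma norm_apply_le:
  assumes a: "a \<in> B"
  shows "cmod (a i) \<le> nB a"
proof (rule ccontr)
  assume "\<not> cmod (a i) \<le> nB a"
  then have less: "nB a < cmod (a i)" and "a i \<noteq> 0"
    using norm_nonneg[OF a] by auto
  define x where "x = (\<lambda>j. (1 / a i) * a j)"
  have x: "x \<in> B"
    unfolding x_def by (rule scale_mem[OF a])
  have "nB x = nB a / cmod (a i)"
    unfolding x_def using norm_scale[OF a, of "1 / a i"] by (simp add: norm_divide)
  then have "nB x < 1"
    using less \<open>a i \<noteq> 0\<close> by (simp add: divide_less_eq)
  then obtain L where "(\<lambda>j. (1 - x j) * L j) = (\<lambda>_. 1)"
    using one_minus_invertible[OF x] by blast
  then have "(1 - x i) * L i = 1"
    by (metis (mono_tags))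
  then show False
    using \<open>a i \<noteq> 0\<close> unfolding x_def by simp
qed

lemma infsum_mem_norm_le:
  fixes f :: "nat \<Rightarrow> 'd sq"
  assumes f: "\<And>n. f n \<in> B" and summable: "(\<lambda>n. nB (f n)) summable_on UNIV"
  shows "(\<lambda>i. \<Sum>\<^sub>\<infinity>n. f n i) \<in> B \<and> nB (\<lambda>i. \<Sum>\<^sub>\<infinity>n. f n i) \<le> (\<Sum>\<^sub>\<infinity>n. nB (f n))"
proof -
  obtain L where L: "L \<in> B" and lim: "(\<lambda>N. nB (\<lambda>i. (\<Sum>n<N. f n i) - L i)) \<longlonglongrightarrow> 0"
    using norm_summable_partial_sums_converge[of f] f summable by blast
  define S where "S N = (\<lambda>i. \<Sum>n<N. f n i)" for N
  have S: "S N \<in> B" "nB (S N) \<le> (\<Sum>n<N. nB (f n))" for N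
    using sum_mem_norm_le[of "{..<N}" f] f unfolding S_def by auto
  have "summable (\<lambda>n. nB (f n))"
    using summable summable_on_UNIV_nonneg_real_iff[of "\<lambda>n. nB (f n)"] by (simp add: norm_nonneg[OF f])
  have "((\<lambda>n. f n i) has_sum L i) UNIV" for i
  proof (rule norm_summable_imp_has_sum)
    show "summable (\<lambda>n. norm (f n i))"
      by (rule summable_comparison_test'[OF \<open>summable (\<lambda>n. nB (f n))\<close>]) (use norm_apply_le[OF f] in auto)
    have "(\<lambda>N. S N i - L i) \<longlonglongrightarrow> 0"
      by (rule Lim_null_comparison[OF always_eventually lim])
        (use norm_apply_le[OF diff_mem[OF S(1) L]] in \<open>auto simp: S_def\<close>)
    then show "(\<lambda>n. f n i) sums L i"
      by (simp add: sums_def S_def LIM_zero_iff)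
  qed
  then have L_eq: "(\<lambda>i. \<Sum>\<^sub>\<infinity>n. f n i) = L"
    by (auto intro!: infsumI)
  have "nB L \<le> nB (\<lambda>i. (\<Sum>n<N. f n i) - L i) + (\<Sum>\<^sub>\<infinity>n. nB (f n))" for N
  proof -
    have "nB L \<le> nB (\<lambda>i. L i - S N i) + nB (S N)"
      using norm_add_le[OF diff_mem[OF L S(1)] S(1), of N N] by simp
    also have "\<dots> \<le> nB (\<lambda>i. (\<Sum>n<N. f n i) - L i) + (\<Sum>\<^sub>\<infinity>n. nB (f n))"
      using norm_minus_commute[OF L S(1), of N] S(2)[of N]
        finite_sum_le_infsum[OF summable, of "{..<N}"] norm_nonneg[OF f]
      unfolding S_def by simp
    finally show ?thesis .
  qed
  then have "nB L \<le> 0 + (\<Sum>\<^sub>\<infinity>n. nB (f n))"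
    by (intro LIMSEQ_le_const[OF tendsto_add[OF lim tendsto_const]]) auto
  then show ?thesis
    using L_eq L by simp
qed

lemma infsum_mem_norm_le_countable:
  fixes f :: "'a \<Rightarrow> 'd sq"
  assumes "countable (UNIV :: 'a set)" and "infinite (UNIV :: 'a set)"
    and f: "\<And>k. f k \<in> B" and summable: "(\<lambda>k. nB (f k)) summable_on UNIV"
  shows "(\<lambda>i. \<Sum>\<^sub>\<infinity>k. f k i) \<in> B \<and> nB (\<lambda>i. \<Sum>\<^sub>\<infinity>k. f k i) \<le> (\<Sum>\<^sub>\<infinity>k. nB (f k))"
proof -
  obtain e :: "nat \<Rightarrow> 'a" where e: "bij_betw e UNIV UNIV"
    using bij_betw_from_nat_into[OF assms(1,2)] by blast
  have "(\<lambda>n. nB (f (e n))) summable_on UNIV"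
    using summable_on_reindex_bij_betw[OF e, of "\<lambda>k. nB (f k)"] summable by simp
  moreover have "(\<Sum>\<^sub>\<infinity>n. f (e n) i) = (\<Sum>\<^sub>\<infinity>k. f k i)" for i
    by (rule infsum_reindex_bij_betw[OF e])
  moreover have "(\<Sum>\<^sub>\<infinity>n. nB (f (e n))) = (\<Sum>\<^sub>\<infinity>k. nB (f k))"
    by (rule infsum_reindex_bij_betw[OF e])
  ultimately show ?thesis
    using infsum_mem_norm_le[of "\<lambda>n. f (e n)"] f by simp
qed

end


section \<open>Matrices with weighted diagonal norms\<close>

lemma infinite_UNIV_idx: "infinite (UNIV :: 'd::finite idx set)"
proof -
  have "inj (\<lambda>n::nat. vec (int n) :: 'd idx)"
    by (auto simp: inj_def vec_eq_iff)
  then have "infinite (range (\<lambda>n::nat. vec (int n) :: 'd idx))"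
    by (rule range_inj_infinite)
  then show ?thesis
    by (rule infinite_super[rotated]) simp
qed

lemma jbr_powr_sq: "(jbr k powr t)\<^sup>2 = jbr k powr (2 * t)"
  using jbr_pos[of k] by (simp add: power2_eq_square powr_add[symmetric])

lemma sq_times_jbr_powr: "(x * jbr k powr t)\<^sup>2 = x\<^sup>2 * jbr k powr (2 * t)"
  by (simp add: power_mult_distrib jbr_powr_sq)

locale weighted_matrices = seq_algebra B nB for B :: "'d::finite sq set" and nB +
  fixes \<alpha>0 :: real
  assumes \<alpha>0: "real CARD('d) / 2 < \<alpha>0"
begin

definition dnorm :: "'d mat \<Rightarrow> 'd idx \<Rightarrow> real" where
  "dnorm A k = nB (diag A k)"

definition weight_sum :: real where
  "weight_sum = (\<Sum>\<^sub>\<infinity>k::'d idx. jbr k powr (-2 * \<alpha>0))"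

lemma \<alpha>0_pos: "0 < \<alpha>0"
  using \<alpha>0 by (smt (verit) divide_nonneg_pos of_nat_0_le_iff)

lemma summable_weight: "(\<lambda>k::'d idx. jbr k powr (-2 * \<alpha>0)) summable_on UNIV"
  by (rule summable_jbr_powr[OF \<alpha>0])

lemma weight_sum_ge_1: "1 \<le> weight_sum"
  using finite_sum_le_infsum[OF summable_weight, of "{0}"] unfolding weight_sum_def by (simp add: jbr_zero)

lemma K0_ge_4: "4 \<le> K0 TYPE('d) \<alpha>0"
proof -
  have "sqrt (4\<^sup>2) \<le> sqrt (20 * weight_sum)"
    using weight_sum_ge_1 by (intro real_sqrt_le_mono) simp
  then show ?thesis
    unfolding K0_def weight_sum_def by simp
qed

lemma K1_ge_1:
  assumes "0 < t"
  shows "1 \<le> K1 TYPE('d) \<alpha>0 t"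
proof -
  have "1 powr (-t) \<le> (1 - 10 powr (-1 / (2 * t))) powr (-t)"
    using assms by (intro powr_mono2') (auto intro: powr_less_one)
  moreover have "1 \<le> sqrt (2 * weight_sum)"
    using weight_sum_ge_1 by simp
  ultimately have "1 * 1 \<le> (1 - 10 powr (-1 / (2 * t))) powr (-t) * sqrt (2 * weight_sum)"
    by (intro mult_mono) auto
  then show ?thesis
    unfolding K1_def weight_sum_def by simp
qed

lemma Ms_iff:
  "A \<in> Ms B nB t \<longleftrightarrow> (\<forall>k. diag A k \<in> B) \<and> (\<lambda>k. (dnorm A k * jbr k powr t)\<^sup>2) summable_on UNIV"
  unfolding Ms_def dnorm_def sq_times_jbr_powr by simp

lemma snorm_eq: "snorm nB t A = sqrt (\<Sum>\<^sub>\<infinity>k. (dnorm A k * jbr k powr t)\<^sup>2)"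
  unfolding snorm_def dnorm_def sq_times_jbr_powr ..

lemma diag_mem: "A \<in> Ms B nB t \<Longrightarrow> diag A k \<in> B"
  unfolding Ms_iff by blast

lemma dnorm_nonneg: "A \<in> Ms B nB t \<Longrightarrow> 0 \<le> dnorm A k"
  unfolding dnorm_def using diag_mem norm_nonneg by blast

lemma snorm_nonneg: "0 \<le> snorm nB t A"
  unfolding snorm_def by (simp add: infsum_nonneg)

lemma Ms_antimono:
  assumes A: "A \<in> Ms B nB t" and "t' \<le> t"
  shows "A \<in> Ms B nB t'"
proof -
  have "(dnorm A k)\<^sup>2 * jbr k powr (2 * t') \<le> (dnorm A k)\<^sup>2 * jbr k powr (2 * t)" for k
    using assms(2) jbr_ge_1[of k] by (intro mult_left_mono powr_mono) auto
  then show ?thesis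
    using A unfolding Ms_def dnorm_def by (auto intro: summable_on_comparison_test)
qed

lemma dnorm_le_snorm:
  assumes A: "A \<in> Ms B nB t" and "0 \<le> t"
  shows "dnorm A k \<le> snorm nB t A"
proof -
  have "dnorm A k * 1 \<le> dnorm A k * jbr k powr t"
    using mult_left_mono[OF ge_one_powr_ge_zero[OF jbr_ge_1 assms(2)] dnorm_nonneg[OF A]] .
  also have "\<dots> \<le> snorm nB t A"
    unfolding snorm_eq using L2_set_le_sqrt_infsum[of "\<lambda>k. dnorm A k * jbr k powr t" "{k}"] A
    unfolding Ms_iff by simp
  finally show ?thesis
    by simp
qed

lemma norm_entry_le_dnorm: "A \<in> Ms B nB t \<Longrightarrow> cmod (A i j) \<le> dnorm A (i - j)"
  using norm_apply_le[OF diag_mem, of A t "i - j" i] unfolding dnorm_def diag_def by simp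

lemma norm_entry_le_snorm: "A \<in> Ms B nB t \<Longrightarrow> 0 \<le> t \<Longrightarrow> cmod (A i j) \<le> snorm nB t A"
  using norm_entry_le_dnorm dnorm_le_snorm order_trans by blast

lemma dnorm_summable:
  assumes A: "A \<in> Ms B nB \<alpha>0"
  shows "dnorm A summable_on UNIV \<and> (\<Sum>\<^sub>\<infinity>k. dnorm A k) \<le> sqrt weight_sum * snorm nB \<alpha>0 A"
proof -
  have x: "(\<lambda>k. (dnorm A k * jbr k powr \<alpha>0)\<^sup>2) summable_on UNIV"
    using A unfolding Ms_iff by blast
  have y: "(\<lambda>k::'d idx. (jbr k powr (- \<alpha>0))\<^sup>2) summable_on UNIV"
    using summable_weight by (simp add: jbr_powr_sq)
  have "jbr k powr \<alpha>0 * jbr k powr (- \<alpha>0) = 1" for k :: "'d idx"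
    using jbr_pos[of k] by (simp add: powr_add[symmetric])
  then have cancel: "(\<lambda>k. dnorm A k * jbr k powr \<alpha>0 * jbr k powr (- \<alpha>0)) = dnorm A"
    by (simp add: fun_eq_iff mult.assoc)
  have weight: "(\<Sum>\<^sub>\<infinity>k::'d idx. (jbr k powr (- \<alpha>0))\<^sup>2) = weight_sum"
    unfolding weight_sum_def by (simp add: jbr_powr_sq)
  have "(\<lambda>k. dnorm A k * jbr k powr \<alpha>0 * jbr k powr (- \<alpha>0)) summable_on UNIV \<and>
        (\<Sum>\<^sub>\<infinity>k. dnorm A k * jbr k powr \<alpha>0 * jbr k powr (- \<alpha>0))
          \<le> sqrt (\<Sum>\<^sub>\<infinity>k. (dnorm A k * jbr k powr \<alpha>0)\<^sup>2) * sqrt (\<Sum>\<^sub>\<infinity>k::'d idx. (jbr k powr (- \<alpha>0))\<^sup>2)"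
    by (rule infsum_Cauchy_Schwarz[OF _ _ x y]) (use dnorm_nonneg[OF A] in auto)
  then show ?thesis
    unfolding cancel weight snorm_eq by (simp only: mult.commute)
qed

lemma Imat_Ms: "Imat \<in> Ms B nB t" and snorm_Imat: "snorm nB t Imat = 1"
proof -
  have diag: "diag Imat k = (if k = 0 then (\<lambda>_. 1) else (\<lambda>_. 0))" for k
    unfolding diag_def Imat_def by auto
  have "((\<lambda>k. (dnorm Imat k * jbr k powr t)\<^sup>2) has_sum 1) UNIV"
    by (rule has_sum_finite_neutralI[of "{0}"]) (auto simp: dnorm_def diag norm_one norm_zero jbr_zero)
  moreover have "diag Imat k \<in> B" for k
    by (cases "k = 0") (simp_all add: diag one_mem zero_mem)
  ultimately show "Imat \<in> Ms B nB t" "snorm nB t Imat = 1"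
    unfolding Ms_iff snorm_eq by (auto simp: has_sum_iff)
qed

lemma Ms_madd:
  assumes A: "A \<in> Ms B nB t" and C: "C \<in> Ms B nB t"
  shows "madd A C \<in> Ms B nB t \<and> snorm nB t (madd A C) \<le> snorm nB t A + snorm nB t C"
proof -
  have diag: "diag (madd A C) k = (\<lambda>i. diag A k i + diag C k i)" for k
    unfolding diag_def madd_def by simp
  then have mem: "diag (madd A C) k \<in> B" for k
    using add_mem[OF diag_mem[OF A] diag_mem[OF C]] by simp
  have "(\<lambda>k. (dnorm (madd A C) k * jbr k powr t)\<^sup>2) summable_on UNIV \<and>
        sqrt (\<Sum>\<^sub>\<infinity>k. (dnorm (madd A C) k * jbr k powr t)\<^sup>2)
          \<le> sqrt (\<Sum>\<^sub>\<infinity>k. (dnorm A k * jbr k powr t)\<^sup>2) + sqrt (\<Sum>\<^sub>\<infinity>k. (dnorm C k * jbr k powr t)\<^sup>2)"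
  proof (rule sqrt_infsum_sq_add_le)
    show "0 \<le> dnorm (madd A C) k * jbr k powr t" for k
      unfolding dnorm_def using norm_nonneg[OF mem] by simp
    show "dnorm (madd A C) k * jbr k powr t \<le> dnorm A k * jbr k powr t + dnorm C k * jbr k powr t" for k
      unfolding dnorm_def diag distrib_right[symmetric]
      by (rule mult_right_mono[OF norm_add_le[OF diag_mem[OF A] diag_mem[OF C]]]) simp
  qed (use A C in \<open>auto simp: Ms_iff\<close>)
  then show ?thesis
    unfolding snorm_eq using mem by (simp add: Ms_iff)
qed

lemma Ms_scale:
  fixes c :: complex
  assumes A: "A \<in> Ms B nB t"
  shows "(\<lambda>i j. c * A i j) \<in> Ms B nB t \<and> snorm nB t (\<lambda>i j. c * A i j) = cmod c * snorm nB t A"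
proof -
  have diag: "diag (\<lambda>i j. c * A i j) k = (\<lambda>i. c * diag A k i)" for k
    unfolding diag_def by simp
  then have dnorm: "dnorm (\<lambda>i j. c * A i j) k = cmod c * dnorm A k" for k
    unfolding dnorm_def using norm_scale[OF diag_mem[OF A]] by simp
  have "(\<lambda>k. (dnorm (\<lambda>i j. c * A i j) k * jbr k powr t)\<^sup>2) = (\<lambda>k. (cmod c)\<^sup>2 * (dnorm A k * jbr k powr t)\<^sup>2)"
    unfolding dnorm by (simp add: power_mult_distrib mult.assoc)
  then show ?thesis
    using A diag scale_mem[OF diag_mem[OF A]]
    by (auto simp: Ms_iff snorm_eq summable_on_cmult_right infsum_cmult_right' real_sqrt_mult)
qed

lemma Ms_infsum:
  fixes P :: "nat \<Rightarrow> 'd mat"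
  assumes P: "\<And>n. P n \<in> Ms B nB t" and "0 \<le> t"
    and summable: "(\<lambda>n. snorm nB t (P n)) summable_on UNIV"
  shows "(\<lambda>i j. \<Sum>\<^sub>\<infinity>n. P n i j) \<in> Ms B nB t \<and>
         snorm nB t (\<lambda>i j. \<Sum>\<^sub>\<infinity>n. P n i j) \<le> (\<Sum>\<^sub>\<infinity>n. snorm nB t (P n))"
proof -
  define R where "R = (\<lambda>i j. \<Sum>\<^sub>\<infinity>n. P n i j)"
  have dnorm_summable: "(\<lambda>n. dnorm (P n) k) summable_on UNIV" for k
    by (rule summable_on_comparison_test[OF summable])
      (use dnorm_le_snorm[OF P \<open>0 \<le> t\<close>] dnorm_nonneg[OF P] in auto)
  have diag_R: "diag R k \<in> B \<and> dnorm R k \<le> (\<Sum>\<^sub>\<infinity>n. dnorm (P n) k)" for k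
  proof -
    have "diag R k = (\<lambda>i. \<Sum>\<^sub>\<infinity>n. diag (P n) k i)"
      unfolding diag_def R_def ..
    then show ?thesis
      using infsum_mem_norm_le[of "\<lambda>n. diag (P n) k"] diag_mem[OF P] dnorm_summable[of k]
      unfolding dnorm_def by simp
  qed
  have "(\<lambda>k. (dnorm R k * jbr k powr t)\<^sup>2) summable_on UNIV \<and>
        sqrt (\<Sum>\<^sub>\<infinity>k. (dnorm R k * jbr k powr t)\<^sup>2)
          \<le> (\<Sum>\<^sub>\<infinity>n. sqrt (\<Sum>\<^sub>\<infinity>k. (dnorm (P n) k * jbr k powr t)\<^sup>2))"
  proof (rule infsum_Minkowski)
    show "0 \<le> dnorm (P n) k * jbr k powr t" for n k
      using dnorm_nonneg[OF P] by simp
    show "0 \<le> dnorm R k * jbr k powr t" for k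
      using diag_R norm_nonneg unfolding dnorm_def by simp
    show "(\<lambda>k. (dnorm (P n) k * jbr k powr t)\<^sup>2) summable_on UNIV" for n
      using P unfolding Ms_iff by blast
    show "(\<lambda>n. dnorm (P n) k * jbr k powr t) summable_on UNIV" for k
      by (rule summable_on_cmult_left[OF dnorm_summable])
    show "(\<lambda>n. sqrt (\<Sum>\<^sub>\<infinity>k. (dnorm (P n) k * jbr k powr t)\<^sup>2)) summable_on UNIV"
      using summable unfolding snorm_eq .
    show "dnorm R k * jbr k powr t \<le> (\<Sum>\<^sub>\<infinity>n. dnorm (P n) k * jbr k powr t)" for k
      using diag_R by (simp add: infsum_cmult_left' mult_right_mono)
  qed
  then show ?thesis
    using diag_R unfolding R_def[symmetric] snorm_eq by (simp add: Ms_iff)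
qed

lemma diag_mmult:
  assumes A: "A \<in> Ms B nB \<alpha>0" and C: "C \<in> Ms B nB \<alpha>0"
  shows "diag (mmult A C) m \<in> B \<and> dnorm (mmult A C) m \<le> convolution (dnorm A) (dnorm C) m"
proof -
  have "\<forall>m. (\<lambda>k. dnorm A k * dnorm C (m - k)) summable_on UNIV"
    using has_sum_convolution[OF dnorm_nonneg[OF A] dnorm_nonneg[OF C]
        has_sum_infsum[of "dnorm A"] has_sum_infsum[of "dnorm C"]] dnorm_summable[OF A] dnorm_summable[OF C]
    by blast
  then have summable: "(\<lambda>k. dnorm A k * dnorm C (m - k)) summable_on UNIV"
    by blast
  \<comment> \<open>the \<open>m\<close>-diagonal of \<open>A C\<close> is \<open>\<Sum>\<^sub>k A\<^sub>k \<sigma>\<^sub>k C\<^sub>m\<^sub>-\<^sub>k\<close>\<close>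
  define f where "f k = (\<lambda>i. diag A k i * shift k (diag C (m - k)) i)" for k
  have f: "f k \<in> B" "nB (f k) \<le> dnorm A k * dnorm C (m - k)" for k
    unfolding f_def dnorm_def
    using mult_mem[OF diag_mem[OF A] shift_mem[OF diag_mem[OF C]]]
      norm_mult_le[OF diag_mem[OF A] shift_mem[OF diag_mem[OF C]]] norm_shift[OF diag_mem[OF C]]
    by auto
  have "diag (mmult A C) m = (\<lambda>i. \<Sum>\<^sub>\<infinity>k. f k i)"
  proof
    fix i
    have "(\<Sum>\<^sub>\<infinity>k. f k i) = (\<Sum>\<^sub>\<infinity>k. (\<lambda>l. A i l * C l (i - m)) (i - k))"
      unfolding f_def diag_def shift_def by (simp add: algebra_simps)
    also have "\<dots> = (\<Sum>\<^sub>\<infinity>l. A i l * C l (i - m))"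
      by (rule infsum_reindex_bij_betw[OF bij_betw_diff_left])
    finally show "diag (mmult A C) m i = (\<Sum>\<^sub>\<infinity>k. f k i)"
      unfolding diag_def mmult_def by simp
  qed
  moreover have "(\<lambda>i. \<Sum>\<^sub>\<infinity>k. f k i) \<in> B \<and> nB (\<lambda>i. \<Sum>\<^sub>\<infinity>k. f k i) \<le> (\<Sum>\<^sub>\<infinity>k. nB (f k))"
    by (rule infsum_mem_norm_le_countable[OF _ infinite_UNIV_idx f(1)])
      (auto intro: summable_on_comparison_test[OF summable] f norm_nonneg)
  moreover have "(\<Sum>\<^sub>\<infinity>k. nB (f k)) \<le> convolution (dnorm A) (dnorm C) m"
    unfolding convolution_def
    by (rule infsum_mono[OF summable_on_comparison_test[OF summable] summable])
      (auto intro: f norm_nonneg)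
  ultimately show ?thesis
    unfolding dnorm_def by auto
qed

lemma mmult_Ms_convolution_le:
  assumes A: "A \<in> Ms B nB \<alpha>0" and C: "C \<in> Ms B nB \<alpha>0"
    and conv: "(\<lambda>m. (convolution (dnorm A) (dnorm C) m * jbr m powr t)\<^sup>2) summable_on UNIV"
  shows "mmult A C \<in> Ms B nB t \<and>
         snorm nB t (mmult A C) \<le> sqrt (\<Sum>\<^sub>\<infinity>m. (convolution (dnorm A) (dnorm C) m * jbr m powr t)\<^sup>2)"
proof -
  have "(\<lambda>m. (dnorm (mmult A C) m * jbr m powr t)\<^sup>2) summable_on UNIV \<and>
        sqrt (\<Sum>\<^sub>\<infinity>m. (dnorm (mmult A C) m * jbr m powr t)\<^sup>2)
          \<le> sqrt (\<Sum>\<^sub>\<infinity>m. (convolution (dnorm A) (dnorm C) m * jbr m powr t)\<^sup>2)"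
    by (rule sqrt_infsum_sq_mono)
      (use conv diag_mmult[OF A C] norm_nonneg in \<open>auto simp: dnorm_def intro: mult_right_mono\<close>)
  then show ?thesis
    using diag_mmult[OF A C] unfolding snorm_eq by (simp add: Ms_iff)
qed

lemma mmult_Ms:
  assumes A: "A \<in> Ms B nB t" and C: "C \<in> Ms B nB t" and "\<alpha>0 \<le> t"
  shows "mmult A C \<in> Ms B nB t \<and>
         snorm nB t (mmult A C) \<le> K0 TYPE('d) \<alpha>0 * snorm nB \<alpha>0 A * snorm nB t C
                                + K1 TYPE('d) \<alpha>0 t * snorm nB t A * snorm nB \<alpha>0 C"
proof -
  have A0: "A \<in> Ms B nB \<alpha>0" and C0: "C \<in> Ms B nB \<alpha>0"
    using Ms_antimono A C \<open>\<alpha>0 \<le> t\<close> by auto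
  have "0 < t"
    using \<alpha>0_pos \<open>\<alpha>0 \<le> t\<close> by simp
  define T where "T = (1 - 10 powr (-1 / (2 * t))) powr (-t)"
  have conv: "(\<lambda>m. (convolution (dnorm A) (dnorm C) m * jbr m powr t)\<^sup>2) summable_on UNIV \<and>
        sqrt (\<Sum>\<^sub>\<infinity>m. (convolution (dnorm A) (dnorm C) m * jbr m powr t)\<^sup>2)
          \<le> sqrt 10 * (\<Sum>\<^sub>\<infinity>k. dnorm A k) * snorm nB t C + T * (\<Sum>\<^sub>\<infinity>k. dnorm C k) * snorm nB t A"
    unfolding snorm_eq
  proof (rule convolution_weighted_sq_le)
    show "jbr m powr t \<le> sqrt 10 * jbr (m - k) powr t + T * jbr k powr t" for m k
      unfolding T_def by (rule jbr_powr_split[OF \<open>0 < t\<close>])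
  qed (use A C dnorm_nonneg[OF A] dnorm_nonneg[OF C] dnorm_summable[OF A0] dnorm_summable[OF C0]
      in \<open>auto simp: Ms_iff T_def\<close>)
  then have mem: "mmult A C \<in> Ms B nB t"
    using mmult_Ms_convolution_le[OF A0 C0] by blast
  have "snorm nB t (mmult A C)
          \<le> sqrt 10 * (\<Sum>\<^sub>\<infinity>k. dnorm A k) * snorm nB t C + T * (\<Sum>\<^sub>\<infinity>k. dnorm C k) * snorm nB t A"
    using conv mmult_Ms_convolution_le[OF A0 C0] by (meson order_trans)
  also have "\<dots> \<le> sqrt 10 * (sqrt weight_sum * snorm nB \<alpha>0 A) * snorm nB t C
                  + T * (sqrt weight_sum * snorm nB \<alpha>0 C) * snorm nB t A"
    using dnorm_summable[OF A0] dnorm_summable[OF C0] snorm_nonneg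
    by (intro add_mono mult_right_mono mult_left_mono) (auto simp: T_def)
  also have "\<dots> \<le> K0 TYPE('d) \<alpha>0 * snorm nB \<alpha>0 A * snorm nB t C
                  + K1 TYPE('d) \<alpha>0 t * snorm nB t A * snorm nB \<alpha>0 C"
  proof -
    have "sqrt 10 * sqrt weight_sum \<le> sqrt (20 * weight_sum)"
      and "sqrt weight_sum \<le> sqrt (2 * weight_sum)"
      using weight_sum_ge_1 by (simp_all add: real_sqrt_mult[symmetric])
    then show ?thesis
      unfolding K0_def K1_def weight_sum_def[symmetric] T_def[symmetric]
      using snorm_nonneg[of t A] snorm_nonneg[of \<alpha>0 A] snorm_nonneg[of t C] snorm_nonneg[of \<alpha>0 C]
      by (intro add_mono) (auto simp: mult_ac T_def intro!: mult_right_mono mult_left_mono)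
  qed
  finally show ?thesis
    using mem by simp
qed

lemma has_sum_dnorm_shift:
  assumes "A \<in> Ms B nB \<alpha>0"
  shows "((\<lambda>l. dnorm A (i - l)) has_sum (\<Sum>\<^sub>\<infinity>k. dnorm A k)) UNIV"
    and "((\<lambda>l. dnorm A (l - j)) has_sum (\<Sum>\<^sub>\<infinity>k. dnorm A k)) UNIV"
  using has_sum_infsum[of "dnorm A"] dnorm_summable[OF assms]
    has_sum_reindex_bij_betw[OF bij_betw_diff_left, of "dnorm A" i]
    has_sum_reindex_bij_betw[OF bij_betw_diff_right, of "dnorm A" j]
  by auto

lemmas summable_dnorm_shift = has_sum_dnorm_shift[THEN has_sum_imp_summable]

lemma summable_row_mult:
  assumes A: "A \<in> Ms B nB \<alpha>0" and y: "\<And>l. cmod (y l) \<le> M"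
  shows "(\<lambda>l. A i l * y l) summable_on UNIV"
proof -
  have "(\<lambda>l. dnorm A (i - l) * M) summable_on UNIV"
    by (rule summable_on_cmult_left[OF summable_dnorm_shift(1)[OF A]])
  then have "(\<lambda>l. norm (A i l * y l)) summable_on UNIV"
    by (rule summable_on_comparison_test)
      (use norm_entry_le_dnorm[OF A] dnorm_nonneg[OF A] y in \<open>auto simp: norm_mult intro: mult_mono\<close>)
  then show ?thesis
    using summable_on_iff_abs_summable_on_complex by blast
qed

lemma summable_mmult:
  assumes "A \<in> Ms B nB \<alpha>0" and "C \<in> Ms B nB \<alpha>0"
  shows "(\<lambda>l. A i l * C l j) summable_on UNIV"
  using summable_row_mult[OF assms(1) norm_entry_le_snorm[OF assms(2) less_imp_le[OF \<alpha>0_pos]]] .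

lemma mmult_madd_left:
  assumes "A \<in> Ms B nB \<alpha>0" and "A' \<in> Ms B nB \<alpha>0" and "C \<in> Ms B nB \<alpha>0"
  shows "mmult (madd A A') C = madd (mmult A C) (mmult A' C)"
  unfolding mmult_def madd_def
  by (simp add: distrib_right infsum_add summable_mmult assms)

lemma mmult_madd_right:
  assumes "A \<in> Ms B nB \<alpha>0" and "C \<in> Ms B nB \<alpha>0" and "C' \<in> Ms B nB \<alpha>0"
  shows "mmult A (madd C C') = madd (mmult A C) (mmult A C')"
  unfolding mmult_def madd_def
  by (simp add: distrib_left infsum_add summable_mmult assms)

lemma mmult_scale_left: "mmult (\<lambda>i l. c * A i l) C = (\<lambda>i j. c * mmult A C i j)"
  unfolding mmult_def by (simp add: mult.assoc infsum_cmult_right')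

lemma mmult_scale_right: "mmult A (\<lambda>l j. c * C l j) = (\<lambda>i j. c * mmult A C i j)"
  unfolding mmult_def by (simp add: mult.left_commute infsum_cmult_right')

lemma mmult_Imat_left: "mmult Imat A = A"
proof (intro ext)
  fix i j
  have "((\<lambda>l. Imat i l * A l j) has_sum A i j) UNIV"
    by (rule has_sum_finite_neutralI[of "{i}"]) (auto simp: Imat_def)
  then show "mmult Imat A i j = A i j"
    unfolding mmult_def by (rule infsumI)
qed

lemma mmult_Imat_right: "mmult A Imat = A"
proof (intro ext)
  fix i j
  have "((\<lambda>l. A i l * Imat l j) has_sum A i j) UNIV"
    by (rule has_sum_finite_neutralI[of "{j}"]) (auto simp: Imat_def)
  then show "mmult A Imat i j = A i j"
    unfolding mmult_def by (rule infsumI)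
qed

lemma mmult_assoc:
  assumes A: "A \<in> Ms B nB \<alpha>0" and C: "C \<in> Ms B nB \<alpha>0" and D: "D \<in> Ms B nB \<alpha>0"
  shows "mmult (mmult A C) D = mmult A (mmult C D)"
proof (intro ext)
  fix i j
  define F where "F p l = A i p * C p l * D l j" for p l
  define G where "G p l = dnorm A (i - p) * dnorm C (p - l) * snorm nB \<alpha>0 D" for p l
  have "norm (F p l) \<le> G p l" for p l
    unfolding F_def G_def norm_mult
    using norm_entry_le_dnorm[OF A] norm_entry_le_dnorm[OF C] norm_entry_le_snorm[OF D] \<alpha>0_pos
      dnorm_nonneg[OF A] dnorm_nonneg[OF C]
    by (intro mult_mono) (auto intro: mult_nonneg_nonneg)
  moreover have "(G p has_sum (dnorm A (i - p) * (\<Sum>\<^sub>\<infinity>k. dnorm C k) * snorm nB \<alpha>0 D)) UNIV" for p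
    unfolding G_def
    using has_sum_cmult_left[OF has_sum_cmult_right[OF has_sum_dnorm_shift(1)[OF C, of p]]]
    by (simp add: mult.assoc)
  moreover have "(\<lambda>p. dnorm A (i - p) * (\<Sum>\<^sub>\<infinity>k. dnorm C k) * snorm nB \<alpha>0 D) summable_on UNIV"
    by (intro summable_on_cmult_left summable_dnorm_shift(1)[OF A])
  ultimately have "(\<Sum>\<^sub>\<infinity>p. \<Sum>\<^sub>\<infinity>l. F p l) = (\<Sum>\<^sub>\<infinity>l. \<Sum>\<^sub>\<infinity>p. F p l)"
    by (rule infsum_swap_dominated)
  then show "mmult (mmult A C) D i j = mmult A (mmult C D) i j"
    unfolding mmult_def F_def by (simp add: infsum_cmult_left'[symmetric] infsum_cmult_right'[symmetric] mult.assoc)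
qed

lemma mmult_infsum_right:
  fixes P :: "nat \<Rightarrow> 'd mat"
  assumes A: "A \<in> Ms B nB \<alpha>0" and P: "\<And>n l j. cmod (P n l j) \<le> p n" and p: "p summable_on UNIV"
  shows "mmult A (\<lambda>l j. \<Sum>\<^sub>\<infinity>n. P n l j) i j = (\<Sum>\<^sub>\<infinity>n. mmult A (P n) i j)"
proof -
  have "norm (A i l * P n l j) \<le> dnorm A (i - l) * p n" for l n
    unfolding norm_mult using norm_entry_le_dnorm[OF A] P dnorm_nonneg[OF A]
    by (intro mult_mono) (auto intro: order_trans[OF norm_ge_zero])
  moreover have "((\<lambda>n. dnorm A (i - l) * p n) has_sum (dnorm A (i - l) * (\<Sum>\<^sub>\<infinity>n. p n))) UNIV" for l
    by (intro has_sum_cmult_right has_sum_infsum p)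
  moreover have "(\<lambda>l. dnorm A (i - l) * (\<Sum>\<^sub>\<infinity>n. p n)) summable_on UNIV"
    by (intro summable_on_cmult_left summable_dnorm_shift(1)[OF A])
  ultimately have "(\<Sum>\<^sub>\<infinity>l. \<Sum>\<^sub>\<infinity>n. A i l * P n l j) = (\<Sum>\<^sub>\<infinity>n. \<Sum>\<^sub>\<infinity>l. A i l * P n l j)"
    by (rule infsum_swap_dominated)
  then show ?thesis
    unfolding mmult_def by (simp add: infsum_cmult_right'[symmetric])
qed

lemma mmult_infsum_left:
  fixes P :: "nat \<Rightarrow> 'd mat"
  assumes A: "A \<in> Ms B nB \<alpha>0" and P: "\<And>n i l. cmod (P n i l) \<le> p n" and p: "p summable_on UNIV"
  shows "mmult (\<lambda>i l. \<Sum>\<^sub>\<infinity>n. P n i l) A i j = (\<Sum>\<^sub>\<infinity>n. mmult (P n) A i j)"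
proof -
  have "norm (P n i l * A l j) \<le> dnorm A (l - j) * p n" for l n
    unfolding norm_mult using norm_entry_le_dnorm[OF A] P dnorm_nonneg[OF A]
    by (subst mult.commute, intro mult_mono) (auto intro: order_trans[OF norm_ge_zero])
  moreover have "((\<lambda>n. dnorm A (l - j) * p n) has_sum (dnorm A (l - j) * (\<Sum>\<^sub>\<infinity>n. p n))) UNIV" for l
    by (intro has_sum_cmult_right has_sum_infsum p)
  moreover have "(\<lambda>l. dnorm A (l - j) * (\<Sum>\<^sub>\<infinity>n. p n)) summable_on UNIV"
    by (intro summable_on_cmult_left summable_dnorm_shift(2)[OF A])
  ultimately have "(\<Sum>\<^sub>\<infinity>l. \<Sum>\<^sub>\<infinity>n. P n i l * A l j) = (\<Sum>\<^sub>\<infinity>n. \<Sum>\<^sub>\<infinity>l. P n i l * A l j)"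
    by (rule infsum_swap_dominated)
  then show ?thesis
    unfolding mmult_def by (simp add: infsum_cmult_left'[symmetric])
qed

lemma mmult_Imat_plus:
  assumes A: "A \<in> Ms B nB \<alpha>0" and C: "C \<in> Ms B nB \<alpha>0"
  shows "mmult (madd Imat A) (madd Imat C) = madd Imat (madd (madd A C) (mmult A C))"
proof -
  have IC: "madd Imat C \<in> Ms B nB \<alpha>0"
    using Ms_madd[OF Imat_Ms C] by blast
  have "mmult (madd Imat A) (madd Imat C) = madd (madd Imat C) (madd A (mmult A C))"
    by (simp add: mmult_madd_left[OF Imat_Ms A IC] mmult_madd_right[OF A Imat_Ms C]
        mmult_Imat_left mmult_Imat_right)
  then show ?thesis
    by (simp add: madd_def fun_eq_iff algebra_simps)
qed

end


section \<open>The Neumann series\<close>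

lemma sum_le_linear_recurrence:
  fixes q b :: "nat \<Rightarrow> real"
  assumes rec: "\<And>n. q (Suc n) \<le> e * q n + b n"
    and "0 \<le> e" and q: "\<And>n. 0 \<le> q n" and b: "\<And>n. 0 \<le> b n"
  shows "(1 - e) * (\<Sum>n<N. q n) \<le> q 0 + (\<Sum>n<N. b n)"
proof (cases N)
  case 0
  then show ?thesis
    using q by simp
next
  case (Suc M)
  have "(\<Sum>n<Suc M. q n) = q 0 + (\<Sum>n<M. q (Suc n))"
    by (rule sum.lessThan_Suc_shift)
  also have "\<dots> \<le> q 0 + (\<Sum>n<M. e * q n + b n)"
    by (intro add_left_mono sum_mono rec)
  also have "\<dots> = q 0 + e * (\<Sum>n<M. q n) + (\<Sum>n<M. b n)"
    by (simp add: sum.distrib sum_distrib_left)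
  also have "\<dots> \<le> q 0 + e * (\<Sum>n<Suc M. q n) + (\<Sum>n<Suc M. b n)"
    using q b \<open>0 \<le> e\<close> by (intro add_mono mult_left_mono) auto
  finally show ?thesis
    unfolding Suc by (simp add: algebra_simps)
qed

locale small_perturbation = weighted_matrices B nB \<alpha>0 for B :: "'d::finite sq set" and nB and \<alpha>0 +
  fixes s C0 :: real and W :: "'d mat"
  assumes C0: "C0 = K0 TYPE('d) \<alpha>0 + K1 TYPE('d) \<alpha>0 \<alpha>0"
    and s: "\<alpha>0 \<le> s" and W: "W \<in> Ms B nB s"
    and small: "4 * C0\<^sup>2 * snorm nB \<alpha>0 W \<le> 1 / 2"
begin

definition Wpow :: "nat \<Rightarrow> 'd mat" where
  "Wpow n = (mmult W ^^ n) W"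

definition R :: "'d mat" where
  "R = (\<lambda>i j. \<Sum>\<^sub>\<infinity>n. (-1) ^ Suc n * Wpow n i j)"

lemma Wpow_0: "Wpow 0 = W" and Wpow_Suc: "Wpow (Suc n) = mmult W (Wpow n)"
  unfolding Wpow_def by simp_all

lemma W_Ms_\<alpha>0: "W \<in> Ms B nB \<alpha>0"
  using Ms_antimono[OF W s] .

lemma Wpow_Ms: "Wpow n \<in> Ms B nB s"
  by (induction n) (simp_all add: Wpow_0 Wpow_Suc W mmult_Ms[OF W _ s])

lemma Wpow_Ms_\<alpha>0: "Wpow n \<in> Ms B nB \<alpha>0"
  using Ms_antimono[OF Wpow_Ms s] .

lemma ratio_le: "C0 * snorm nB \<alpha>0 W \<le> 1 / 32" and snorm_W_\<alpha>0_le: "snorm nB \<alpha>0 W \<le> 1 / 128"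
proof -
  have "4 \<le> C0"
    using C0 K0_ge_4 K1_ge_1[OF \<alpha>0_pos] by simp
  have w: "0 \<le> snorm nB \<alpha>0 W"
    by (rule snorm_nonneg)
  have "4 * (C0 * snorm nB \<alpha>0 W) \<le> C0 * (C0 * snorm nB \<alpha>0 W)"
    using \<open>4 \<le> C0\<close> w by (intro mult_right_mono) auto
  moreover have "16 * snorm nB \<alpha>0 W \<le> C0 * C0 * snorm nB \<alpha>0 W"
    using \<open>4 \<le> C0\<close> w mult_mono[of 4 C0 4 C0] by (intro mult_right_mono) auto
  ultimately show "C0 * snorm nB \<alpha>0 W \<le> 1 / 32" "snorm nB \<alpha>0 W \<le> 1 / 128"
    using small by (simp_all add: power2_eq_square mult.assoc)
qed

lemma snorm_Wpow_\<alpha>0_le: "snorm nB \<alpha>0 (Wpow n) \<le> snorm nB \<alpha>0 W * (C0 * snorm nB \<alpha>0 W) ^ n"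
proof (induction n)
  case 0
  then show ?case
    by (simp add: Wpow_0)
next
  case (Suc n)
  have "snorm nB \<alpha>0 (Wpow (Suc n)) \<le> C0 * snorm nB \<alpha>0 W * snorm nB \<alpha>0 (Wpow n)"
    using mmult_Ms[OF W_Ms_\<alpha>0 Wpow_Ms_\<alpha>0 order_refl, of n] unfolding Wpow_Suc C0
    by (simp add: algebra_simps)
  also have "\<dots> \<le> C0 * snorm nB \<alpha>0 W * (snorm nB \<alpha>0 W * (C0 * snorm nB \<alpha>0 W) ^ n)"
    using Suc.IH ratio_le C0 K0_ge_4 K1_ge_1[OF \<alpha>0_pos] snorm_nonneg[of \<alpha>0 W]
    by (intro mult_left_mono) auto
  finally show ?case
    by (simp add: mult_ac)
qed

lemma snorm_Wpow_\<alpha>0_summable: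
  "(\<lambda>n. snorm nB \<alpha>0 (Wpow n)) summable_on UNIV \<and> (\<Sum>\<^sub>\<infinity>n. snorm nB \<alpha>0 (Wpow n)) \<le> 1 / 124"
proof (rule nonneg_summable_on_infsum_le)
  define r where "r = C0 * snorm nB \<alpha>0 W"
  have r: "0 \<le> r" "r \<le> 1 / 32"
    unfolding r_def using ratio_le C0 K0_ge_4 K1_ge_1[OF \<alpha>0_pos] snorm_nonneg[of \<alpha>0 W] by auto
  have "((\<lambda>n. r ^ n) has_sum (1 / (1 - r))) UNIV"
    using r by (intro sums_nonneg_imp_has_sum geometric_sums) auto
  from has_sum_cmult_right[OF this, of "snorm nB \<alpha>0 W"]
  have geometric: "((\<lambda>n. snorm nB \<alpha>0 W * r ^ n) has_sum (snorm nB \<alpha>0 W / (1 - r))) UNIV"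
    by simp
  fix F :: "nat set"
  assume "finite F"
  have "(\<Sum>n\<in>F. snorm nB \<alpha>0 (Wpow n)) \<le> (\<Sum>n\<in>F. snorm nB \<alpha>0 W * r ^ n)"
    unfolding r_def by (intro sum_mono snorm_Wpow_\<alpha>0_le)
  also have "\<dots> \<le> snorm nB \<alpha>0 W / (1 - r)"
    using r snorm_nonneg[of \<alpha>0 W] by (intro finite_sum_le_has_sum[OF geometric \<open>finite F\<close>]) auto
  also have "\<dots> \<le> (1 / 128) / (31 / 32)"
    by (rule frac_le) (use r snorm_W_\<alpha>0_le snorm_nonneg[of \<alpha>0 W] in auto)
  finally show "(\<Sum>n\<in>F. snorm nB \<alpha>0 (Wpow n)) \<le> 1 / 124"
    by simp
qed (rule snorm_nonneg)

lemma sum_snorm_Wpow_le: "(\<Sum>n<N. snorm nB s (Wpow n)) \<le> 2 * K1 TYPE('d) \<alpha>0 s * snorm nB s W"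
proof -
  define e where "e = K0 TYPE('d) \<alpha>0 * snorm nB \<alpha>0 W"
  define Y where "Y = K1 TYPE('d) \<alpha>0 s * snorm nB s W"
  have "e \<le> C0 * snorm nB \<alpha>0 W"
    unfolding e_def C0 using K1_ge_1[OF \<alpha>0_pos] snorm_nonneg[of \<alpha>0 W] by (intro mult_right_mono) auto
  then have e: "0 \<le> e" "e \<le> 1 / 32"
    using ratio_le K0_ge_4 snorm_nonneg[of \<alpha>0 W] unfolding e_def by auto
  have "1 \<le> K1 TYPE('d) \<alpha>0 s"
    using K1_ge_1 \<alpha>0_pos s by simp
  then have Y: "snorm nB s W \<le> Y"
    unfolding Y_def using snorm_nonneg[of s W] by (simp add: mult_le_cancel_right1)
  have "(1 - e) * (\<Sum>n<N. snorm nB s (Wpow n))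
          \<le> snorm nB s (Wpow 0) + (\<Sum>n<N. Y * snorm nB \<alpha>0 (Wpow n))"
  proof (rule sum_le_linear_recurrence)
    show "snorm nB s (Wpow (Suc n)) \<le> e * snorm nB s (Wpow n) + Y * snorm nB \<alpha>0 (Wpow n)" for n
      using mmult_Ms[OF W Wpow_Ms s, of n] unfolding Wpow_Suc e_def Y_def by (simp add: mult_ac)
    show "0 \<le> Y * snorm nB \<alpha>0 (Wpow n)" for n
      using Y snorm_nonneg[of s W] snorm_nonneg[of \<alpha>0 "Wpow n"] by simp
  qed (use e snorm_nonneg in auto)
  also have "\<dots> \<le> snorm nB s W + Y * (1 / 124)"
  proof -
    have "(\<Sum>n<N. snorm nB \<alpha>0 (Wpow n)) \<le> 1 / 124"
      using finite_sum_le_infsum[OF conjunct1[OF snorm_Wpow_\<alpha>0_summable], of "{..<N}"]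
        snorm_Wpow_\<alpha>0_summable snorm_nonneg[of \<alpha>0] by simp
    then have "Y * (\<Sum>n<N. snorm nB \<alpha>0 (Wpow n)) \<le> Y * (1 / 124)"
      using Y snorm_nonneg[of s W] by (intro mult_left_mono) auto
    then show ?thesis
      by (simp add: Wpow_0 sum_distrib_left)
  qed
  finally have "(1 - e) * (\<Sum>n<N. snorm nB s (Wpow n)) \<le> snorm nB s W + Y / 124"
    by simp
  moreover have "31 / 32 * (\<Sum>n<N. snorm nB s (Wpow n)) \<le> (1 - e) * (\<Sum>n<N. snorm nB s (Wpow n))"
    using e by (intro mult_right_mono sum_nonneg) (auto intro: snorm_nonneg)
  ultimately show ?thesis
    using Y snorm_nonneg[of s W] unfolding Y_def by linarith
qed

lemma snorm_Wpow_summable: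
  "(\<lambda>n. snorm nB s (Wpow n)) summable_on UNIV \<and>
   (\<Sum>\<^sub>\<infinity>n. snorm nB s (Wpow n)) \<le> 2 * K1 TYPE('d) \<alpha>0 s * snorm nB s W"
proof (rule nonneg_summable_on_infsum_le)
  fix F :: "nat set"
  assume "finite F"
  then obtain N where "F \<subseteq> {..<N}"
    using finite_nat_iff_bounded by blast
  then have "(\<Sum>n\<in>F. snorm nB s (Wpow n)) \<le> (\<Sum>n<N. snorm nB s (Wpow n))"
    by (intro sum_mono2) (auto intro: snorm_nonneg)
  then show "(\<Sum>n\<in>F. snorm nB s (Wpow n)) \<le> 2 * K1 TYPE('d) \<alpha>0 s * snorm nB s W"
    using sum_snorm_Wpow_le[of N] by linarith
qed (rule snorm_nonneg)

lemma norm_neumann_term_le: "cmod ((-1) ^ Suc n * Wpow n i j) \<le> snorm nB \<alpha>0 (Wpow n)"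
  using norm_entry_le_snorm[OF Wpow_Ms_\<alpha>0] \<alpha>0_pos by (simp add: norm_mult norm_power)

lemma R_Ms:
  assumes "0 \<le> t" and Wpow: "\<And>n. Wpow n \<in> Ms B nB t"
    and summable: "(\<lambda>n. snorm nB t (Wpow n)) summable_on UNIV"
  shows "R \<in> Ms B nB t \<and> snorm nB t R \<le> (\<Sum>\<^sub>\<infinity>n. snorm nB t (Wpow n))"
proof -
  have "(\<lambda>i j. (-1) ^ Suc n * Wpow n i j) \<in> Ms B nB t \<and>
        snorm nB t (\<lambda>i j. (-1) ^ Suc n * Wpow n i j) = snorm nB t (Wpow n)" for n
    using Ms_scale[OF Wpow, of "(-1) ^ Suc n" n] by (simp add: norm_power)
  then show ?thesis
    unfolding R_def using Ms_infsum[of "\<lambda>n i j. (-1) ^ Suc n * Wpow n i j" t] assms(1) summable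
    by presburger
qed

lemma R_Ms_\<alpha>0: "R \<in> Ms B nB \<alpha>0" and snorm_R_\<alpha>0_le: "snorm nB \<alpha>0 R \<le> 1 / 124"
  using R_Ms[OF _ Wpow_Ms_\<alpha>0 conjunct1[OF snorm_Wpow_\<alpha>0_summable]] snorm_Wpow_\<alpha>0_summable \<alpha>0_pos
  by auto

lemma R_Ms_s: "R \<in> Ms B nB s" and snorm_R_le: "snorm nB s R \<le> 2 * K1 TYPE('d) \<alpha>0 s * snorm nB s W"
  using R_Ms[OF _ Wpow_Ms conjunct1[OF snorm_Wpow_summable]] snorm_Wpow_summable \<alpha>0_pos s
  by auto

lemma R_eq: "R i j = - W i j - (\<Sum>\<^sub>\<infinity>n. (-1) ^ Suc n * Wpow (Suc n) i j)"
proof -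
  have "(\<lambda>n. norm ((-1) ^ Suc n * Wpow n i j)) summable_on UNIV"
    by (rule summable_on_comparison_test[OF conjunct1[OF snorm_Wpow_\<alpha>0_summable] norm_neumann_term_le])
      simp
  then have "(\<lambda>n. (-1) ^ Suc n * Wpow n i j) summable_on UNIV"
    by (rule abs_summable_summable)
  then have "R i j = (-1) ^ Suc 0 * Wpow 0 i j + (\<Sum>\<^sub>\<infinity>n. (-1) ^ Suc (Suc n) * Wpow (Suc n) i j)"
    unfolding R_def by (rule infsum_split_first)
  also have "(\<Sum>\<^sub>\<infinity>n. (-1) ^ Suc (Suc n) * Wpow (Suc n) i j) = - (\<Sum>\<^sub>\<infinity>n. (-1) ^ Suc n * Wpow (Suc n) i j)"
    by (simp add: infsum_uminus)
  finally show ?thesis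
    by (simp add: Wpow_0)
qed

lemma mmult_W_R: "mmult W R = (\<lambda>i j. - W i j - R i j)"
proof (intro ext)
  fix i j
  have "mmult W R i j = (\<Sum>\<^sub>\<infinity>n. mmult W (\<lambda>l j. (-1) ^ Suc n * Wpow n l j) i j)"
    unfolding R_def
    by (rule mmult_infsum_right[OF W_Ms_\<alpha>0 norm_neumann_term_le conjunct1[OF snorm_Wpow_\<alpha>0_summable]])
  also have "\<dots> = (\<Sum>\<^sub>\<infinity>n. (-1) ^ Suc n * Wpow (Suc n) i j)"
    unfolding mmult_scale_right Wpow_Suc ..
  finally show "mmult W R i j = - W i j - R i j"
    using R_eq[of i j] by simp
qed

lemma Wpow_mult_W: "mmult (Wpow n) W = Wpow (Suc n)"
proof (induction n)
  case 0
  then show ?case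
    by (simp add: Wpow_0 Wpow_Suc)
next
  case (Suc n)
  then show ?case
    using mmult_assoc[OF W_Ms_\<alpha>0 Wpow_Ms_\<alpha>0 W_Ms_\<alpha>0, of n] by (simp add: Wpow_Suc)
qed

lemma mmult_R_W: "mmult R W = (\<lambda>i j. - W i j - R i j)"
proof (intro ext)
  fix i j
  have "mmult R W i j = (\<Sum>\<^sub>\<infinity>n. mmult (\<lambda>i l. (-1) ^ Suc n * Wpow n i l) W i j)"
    unfolding R_def
    by (rule mmult_infsum_left[OF W_Ms_\<alpha>0 norm_neumann_term_le conjunct1[OF snorm_Wpow_\<alpha>0_summable]])
  also have "\<dots> = (\<Sum>\<^sub>\<infinity>n. (-1) ^ Suc n * Wpow (Suc n) i j)"
    unfolding mmult_scale_left Wpow_mult_W ..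
  finally show "mmult R W i j = - W i j - R i j"
    using R_eq[of i j] by simp
qed

lemma neumann_inverse:
  "mmult (madd Imat W) (madd Imat R) = Imat" "mmult (madd Imat R) (madd Imat W) = Imat"
proof -
  have "madd (madd W R) (mmult W R) = (\<lambda>_ _. 0)" "madd (madd R W) (mmult R W) = (\<lambda>_ _. 0)"
    unfolding mmult_W_R mmult_R_W by (simp_all add: madd_def)
  moreover have "madd Imat (\<lambda>_ _. 0) = Imat"
    by (simp add: madd_def)
  ultimately show "mmult (madd Imat W) (madd Imat R) = Imat" "mmult (madd Imat R) (madd Imat W) = Imat"
    unfolding mmult_Imat_plus[OF W_Ms_\<alpha>0 R_Ms_\<alpha>0] mmult_Imat_plus[OF R_Ms_\<alpha>0 W_Ms_\<alpha>0] by simp_all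
qed

end

theorem lemma4p9:
  fixes B :: "'d::finite sq set" and nB :: "'d sq \<Rightarrow> real"
    and \<alpha>0 s C0 :: real and W :: "'d mat"
  assumes BA: "seq_banach_algebra B nB"
    and a0: "\<alpha>0 > real CARD('d) / 2"
    and C0: "C0 = K0 TYPE('d) \<alpha>0 + K1 TYPE('d) \<alpha>0 \<alpha>0"
    and s: "s \<ge> \<alpha>0"
    and W: "W \<in> Ms B nB s"
    and small: "4 * C0\<^sup>2 * snorm nB \<alpha>0 W \<le> 1 / 2"
  shows "\<exists>U \<in> Ms B nB s.
           mmult (madd Imat W) U = Imat \<and> mmult U (madd Imat W) = Imat \<and>
           (s > \<alpha>0 \<longrightarrow> snorm nB s U \<le> 1 + 2 * K1 TYPE('d) \<alpha>0 s * snorm nB s W) \<and>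
           snorm nB \<alpha>0 U \<le> 2 \<and>
           snorm nB s (mdiff U Imat) \<le> 2 * K1 TYPE('d) \<alpha>0 s * snorm nB s W"
proof -
  interpret small_perturbation B nB \<alpha>0 s C0 W
    by unfold_locales (use BA a0 C0 s W small in auto)
  have U_s: "madd Imat R \<in> Ms B nB s" "snorm nB s (madd Imat R) \<le> 1 + snorm nB s R"
    using Ms_madd[OF Imat_Ms R_Ms_s] snorm_Imat by auto
  have "snorm nB \<alpha>0 (madd Imat R) \<le> 1 + snorm nB \<alpha>0 R"
    using Ms_madd[OF Imat_Ms R_Ms_\<alpha>0] snorm_Imat by auto
  moreover have "mdiff (madd Imat R) Imat = R"
    by (simp add: mdiff_def madd_def)
  ultimately show ?thesis
    using U_s neumann_inverse snorm_R_le snorm_R_\<alpha>0_le by (intro bexI[of _ "madd Imat R"]) auto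
qed

end
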